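(* Let $\gamma_1,\gamma_2,\gamma_3,\gamma_4>0$. The embedded Markov chain of the Schlögl model, i.e. the Markov chain on $\mathbb{N}_0$ with transition probabilities \[ P(x,x+1)=\frac{\gamma_1+\gamma_3x(x-1)}{\mu(x)},\qquad P(x,x-1)=\frac{\gamma_2x+\gamma_4x(x-1)(x-2)}{\mu(x)}, \] where $\mu(x)=\gamma_1+\gamma_2x+\gamma_3x(x-1)+\gamma_4x(x-1)(x-2)$, admits a unique stationary distribution. Consequently, the associated RDS $(\theta,\varphi)$ described in the context admits a unique weak attractor.
   Context: Noise space $\mathcal{Q}=\{q=(q_n)_{n\in\mathbb{Z}}: q_n\in[0,1]\}$ with product Borel $\sigma$-algebra and $\mathbb{P}=\lambda^{\mathbb{Z}}$ ($\lambda$ Lebesgue on $[0,1]$), invertible shift $(\theta q)_n=q_{n+1}$. With propensities $\alpha_1(x)=\gamma_1$, $\alpha_2(x)=\gamma_2x$, $\alpha_3(x)=\gamma_3x(x-1)$, $\alpha_4(x)=\gamma_4x(x-1)(x-2)$ and state changes $\nu_1=\nu_3=1$, $\nu_2=\nu_4=-1$, let $\kappa(x,q_0)$ be the smallest $k$ with $\sum_{j\le k}\alpha_j(x)>q_0\sum_{j=1}^4\alpha_j(x)$, and $f_q(x)=x+\nu_{\kappa(x,q_0)}$; $\varphi^0_q=\mathrm{id}$, $\varphi^n_q=f_{\theta^{n-1}q}\circ\cdots\circ f_q$. With $d(x,B)=\inf_{y\in B}|x-y|$ and $\mathrm{dist}(A,B)=\sup_{x\in A}d(x,B)$, a weak attractor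 is a map $A:\mathcal{Q}\to\mathcal{P}(\mathbb{N}_0)$ with $q\mapsto d(x,A_q)$ measurable for each $x$, $A_q$ nonempty and finite for all $q$, $\varphi^n_q(A_q)=A_{\theta^nq}$ for all $n\in\mathbb{N}$ $\mathbb{P}$-a.s., and $\mathrm{dist}(\varphi^n_q(B),A_{\theta^nq})\to0$ in probability for every finite $B\subset\mathbb{N}_0$; uniqueness is up to $\mathbb{P}$-a.s. equality. *)

theory Defs
  imports "HOL-Probability.Probability"
begin

text \<open>Rate constants are given as a function g with g 1, g 2, g 3, g 4 the four
  parameters gamma_1 .. gamma_4 (other values are irrelevant).\<close>

definition noise :: "(int \<Rightarrow> real) measure" where
  "noise = PiM UNIV (\<lambda>_::int. restrict_space lborel {0..(1::real)})"

definition shift :: "(int \<Rightarrow> real) \<Rightarrow> (int \<Rightarrow> real)" where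
  "shift q = (\<lambda>n. q (n + 1))"

definition alpha :: "(nat \<Rightarrow> real) \<Rightarrow> nat \<Rightarrow> nat \<Rightarrow> real" where
  "alpha g j x =
     (if j = 1 then g 1
      else if j = 2 then g 2 * real x
      else if j = 3 then g 3 * real x * (real x - 1)
      else if j = 4 then g 4 * real x * (real x - 1) * (real x - 2)
      else 0)"

definition nu :: "nat \<Rightarrow> int" where
  "nu j = (if j = 1 \<or> j = 3 then 1 else -1)"

text \<open>Smallest k in {1..4} with partial sum exceeding q0 times the total; if no such k
  exists (only possible for q0 >= 1, a null event) we use the convention k = 4.\<close>
definition kappa :: "(nat \<Rightarrow> real) \<Rightarrow> nat \<Rightarrow> real \<Rightarrow> nat" where
  "kappa g x q0 =
     (if \<exists>k\<in>{1..4}. (\<Sum>j\<in>{1..k}. alpha g j x) > q0 * (\<Sum>j\<in>{1..4}. alpha g j x)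
      then (LEAST k. k \<in> {1..4} \<and> (\<Sum>j\<in>{1..k}. alpha g j x) > q0 * (\<Sum>j\<in>{1..4}. alpha g j x))
      else 4)"

definition fstep :: "(nat \<Rightarrow> real) \<Rightarrow> (int \<Rightarrow> real) \<Rightarrow> nat \<Rightarrow> nat" where
  "fstep g q x = nat (int x + nu (kappa g x (q 0)))"

primrec phi :: "(nat \<Rightarrow> real) \<Rightarrow> nat \<Rightarrow> (int \<Rightarrow> real) \<Rightarrow> nat \<Rightarrow> nat" where
  "phi g 0 q = id"
| "phi g (Suc n) q = fstep g ((shift ^^ n) q) \<circ> phi g n q"

definition mu :: "(nat \<Rightarrow> real) \<Rightarrow> nat \<Rightarrow> real" where
  "mu g x = g 1 + g 2 * real x + g 3 * real x * (real x - 1)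
            + g 4 * real x * (real x - 1) * (real x - 2)"

definition trans_P :: "(nat \<Rightarrow> real) \<Rightarrow> nat \<Rightarrow> nat \<Rightarrow> real" where
  "trans_P g x y =
     (if y = x + 1 then (g 1 + g 3 * real x * (real x - 1)) / mu g x else 0)
   + (if y + 1 = x then (g 2 * real x + g 4 * real x * (real x - 1) * (real x - 2)) / mu g x else 0)"

definition stationary :: "(nat \<Rightarrow> real) \<Rightarrow> nat pmf \<Rightarrow> bool" where
  "stationary g p \<longleftrightarrow> (\<forall>y. pmf p y = (\<Sum>x. pmf p x * trans_P g x y))"

definition pt_dist :: "nat \<Rightarrow> nat set \<Rightarrow> real" where
  "pt_dist x B = Inf ((\<lambda>y. \<bar>real x - real y\<bar>) ` B)"

text \<open>sup over A of d(x,B); the 0 makes the value 0 for empty A (all values are >= 0).\<close>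
definition set_dist :: "nat set \<Rightarrow> nat set \<Rightarrow> real" where
  "set_dist A B = Sup (insert 0 ((\<lambda>x. pt_dist x B) ` A))"

definition weak_attractor :: "(nat \<Rightarrow> real) \<Rightarrow> ((int \<Rightarrow> real) \<Rightarrow> nat set) \<Rightarrow> bool" where
  "weak_attractor g A \<longleftrightarrow>
     (\<forall>x. (\<lambda>q. pt_dist x (A q)) \<in> borel_measurable noise)
   \<and> (\<forall>q\<in>space noise. A q \<noteq> {} \<and> finite (A q))
   \<and> (AE q in noise. \<forall>n. phi g n q ` A q = A ((shift ^^ n) q))
   \<and> (\<forall>B. finite B \<longrightarrow> (\<forall>\<epsilon>>0.
         (\<forall>n. {q \<in> space noise. set_dist (phi g n q ` B) (A ((shift ^^ n) q)) > \<epsilon>} \<in> sets noise)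
       \<and> (\<lambda>n. measure noise {q \<in> space noise. set_dist (phi g n q ` B) (A ((shift ^^ n) q)) > \<epsilon>})
           \<longlonglongrightarrow> 0))"

end

theory Submission
  imports Defs
begin

text \<open>
  The embedded chain is a birth-death chain whose up-probability tends to 0, because the
  cubic death rate dominates.  Hence the detailed-balance weights are summable and normalise
  to a stationary distribution \<open>\<pi>\<close>; conversely, stationarity forces detailed balance by
  induction from the state 0, which gives uniqueness.

  Almost surely every step of the random dynamical system changes every state by exactly one,
  so parity alternates and the maps preserve the order of states of equal parity.
  Stationarity yields the tightness bound \<open>P(\<phi>\<^sub>n(y) = z) \<le> \<pi>(z) / \<pi>(y)\<close>.  A window of
  \<open>K + 2\<close> noise values, which has positive probability and is independent of the past, first
  pushes every state up to \<open>K\<close> down to at most 3 and then merges all states of equal parity;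
  together with tightness this makes any two trajectories of equal parity coalesce in
  probability.  The pullback trajectories started in 0 at time \<open>-n\<close> increase along even and
  along odd \<open>n\<close> and are almost surely bounded, so they become constant; their two limits form
  an invariant random set that attracts every point.  Finally, a weak attractor lies almost
  surely inside any other one: by invariance it is the image of a set that is bounded with
  high probability, and the other one attracts bounded sets.
\<close>

lemma Least_first_of_four:
  fixes P :: "nat \<Rightarrow> bool"
  shows "(if \<exists>k\<in>{1..4}. P k then LEAST k. k \<in> {1..4} \<and> P k else 4)
       = (if P 1 then 1 else if P 2 then 2 else if P 3 then 3 else 4)"
proof -
  have upto4: "{1..4::nat} = {1, 2, 3, 4}"
    by auto
  have least: "(LEAST k. k \<in> {1, 2, 3, 4} \<and> P k) = m"
    if "m \<in> {1, 2, 3, 4}" "P m" "\<forall>k\<in>{1, 2, 3, 4}. k < m \<longrightarrow> \<not> P k" for m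
    using that by (intro Least_equality) (auto simp: not_less[symmetric])
  consider "P 1" | "\<not> P 1" "P 2" | "\<not> P 1" "\<not> P 2" "P 3" | "\<not> P 1" "\<not> P 2" "\<not> P 3"
    by blast
  then show ?thesis
    unfolding upto4 by cases (use least[of 1] least[of 2] least[of 3] least[of 4] in auto)
qed

lemma mu_eq_sum_alpha: "mu g x = alpha g 1 x + alpha g 2 x + alpha g 3 x + alpha g 4 x"
  unfolding mu_def alpha_def by simp

lemma kappa_explicit:
  "kappa g x u =
     (if u * mu g x < alpha g 1 x then 1
      else if u * mu g x < alpha g 1 x + alpha g 2 x then 2
      else if u * mu g x < alpha g 1 x + alpha g 2 x + alpha g 3 x then 3 else 4)"
proof -
  define P where "P k \<longleftrightarrow> u * mu g x < (\<Sum>j\<in>{1..k}. alpha g j x)" for k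
  have partial_sums:
    "(\<Sum>j\<in>{1..1}. f j) = f 1" "(\<Sum>j\<in>{1..2}. f j) = f 1 + f 2"
    "(\<Sum>j\<in>{1..3}. f j) = f 1 + f 2 + f 3" "(\<Sum>j\<in>{1..4}. f j) = f 1 + f 2 + f 3 + f 4"
    for f :: "nat \<Rightarrow> real"
    by (simp_all add: numeral_eq_Suc)
  have "kappa g x u = (if \<exists>k\<in>{1..4}. P k then LEAST k. k \<in> {1..4} \<and> P k else 4)"
    unfolding kappa_def P_def partial_sums(4) mu_eq_sum_alpha ..
  also have "\<dots> = (if P 1 then 1 else if P 2 then 2 else if P 3 then 3 else 4)"
    by (rule Least_first_of_four)
  finally show ?thesis
    unfolding P_def partial_sums(1-3) .
qed

definition step :: "(nat \<Rightarrow> real) \<Rightarrow> nat \<Rightarrow> real \<Rightarrow> nat" where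
  "step g x u = nat (int x + nu (kappa g x u))"

lemma fstep_eq_step: "fstep g q x = step g x (q 0)"
  unfolding fstep_def step_def ..

lemma step_eq_if: "step g x u = (if kappa g x u \<in> {1, 3} then Suc x else x - 1)"
  unfolding step_def nu_def by auto

lemma step_le_Suc: "step g x u \<le> Suc x"
  unfolding step_eq_if by auto

lemma kappa_measurable [measurable]: "kappa g x \<in> borel \<rightarrow>\<^sub>M count_space UNIV"
  by (subst kappa_explicit[of g x, abs_def]) measurable

lemma step_measurable [measurable]: "step g x \<in> borel \<rightarrow>\<^sub>M count_space UNIV"
  unfolding step_def[abs_def] by measurable

definition p_up :: "(nat \<Rightarrow> real) \<Rightarrow> nat \<Rightarrow> real" where
  "p_up g x = (g 1 + g 3 * real x * (real x - 1)) / mu g x"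

definition p_down :: "(nat \<Rightarrow> real) \<Rightarrow> nat \<Rightarrow> real" where
  "p_down g x = (g 2 * real x + g 4 * real x * (real x - 1) * (real x - 2)) / mu g x"

lemma trans_P_Suc_right: "trans_P g x (Suc x) = p_up g x"
  unfolding trans_P_def p_up_def by simp

lemma trans_P_Suc_left: "trans_P g (Suc x) x = p_down g (Suc x)"
  unfolding trans_P_def p_down_def by simp

lemma trans_P_eq_0: "y \<noteq> Suc x \<Longrightarrow> x \<noteq> Suc y \<Longrightarrow> trans_P g x y = 0"
  unfolding trans_P_def by auto

lemma p_up_eq: "p_up g x = (alpha g 1 x + alpha g 3 x) / mu g x"
  unfolding p_up_def alpha_def by (simp add: mult.assoc)

lemma p_down_eq: "p_down g x = (alpha g 2 x + alpha g 4 x) / mu g x"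
  unfolding p_down_def alpha_def by (simp add: mult.assoc)

lemma falling2_nonneg: "real x * (real x - 1) \<ge> 0"
  by (cases x) auto

lemma falling3_nonneg: "real x * (real x - 1) * (real x - 2) \<ge> 0"
  by (cases x; cases "x - 1") (auto simp: algebra_simps)

definition unif01 :: "real measure" where
  "unif01 = restrict_space lborel {0..1}"

lemma noise_eq_PiM: "noise = PiM UNIV (\<lambda>_. unif01)"
  unfolding noise_def unif01_def ..

lemma prob_space_unif01: "prob_space unif01"
  unfolding unif01_def by (rule prob_space_restrict_space) auto

lemma space_unif01: "space unif01 = {0..1}"
  unfolding unif01_def by (simp add: space_restrict_space)

lemma sets_unif01_iff: "A \<in> sets unif01 \<longleftrightarrow> A \<in> sets borel \<and> A \<subseteq> {0..1}"
  unfolding unif01_def by (auto simp: sets_restrict_space_iff)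

lemma measure_unif01:
  "A \<in> sets borel \<Longrightarrow> A \<subseteq> {0..1} \<Longrightarrow> measure unif01 A = measure lborel A"
  unfolding unif01_def by (subst measure_restrict_space) auto

lemma step_set_sets_unif01: "{u \<in> {0..<1}. step g x u = z} \<in> sets unif01"
proof -
  have "{u \<in> space borel. step g x u = z} \<in> sets borel"
    by measurable
  then show ?thesis
    unfolding sets_unif01_iff by (auto simp: Int_def conj_ac dest: sets.Int[of _ borel "{0..<1}"])
qed

lemma suminf_mult_trans_P:
  fixes v :: "nat \<Rightarrow> real"
  shows "(\<Sum>x. v x * trans_P g x y) =
           (case y of 0 \<Rightarrow> v 1 * p_down g 1
                    | Suc m \<Rightarrow> v m * p_up g m + v (Suc (Suc m)) * p_down g (Suc (Suc m)))"
proof (cases y)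
  case 0
  have "(\<Sum>x. v x * trans_P g x y) = (\<Sum>x\<in>{1}. v x * trans_P g x y)"
    by (rule suminf_finite) (auto simp: 0 trans_P_def)
  then show ?thesis
    using 0 trans_P_Suc_left[of g 0] by simp
next
  case (Suc m)
  have "(\<Sum>x. v x * trans_P g x y) = (\<Sum>x\<in>{m, Suc (Suc m)}. v x * trans_P g x y)"
    by (rule suminf_finite) (auto simp: Suc trans_P_def)
  then show ?thesis
    using Suc trans_P_Suc_left[of g "Suc m"] trans_P_Suc_right[of g m] by simp
qed

lemma pmf_nat_sums_1: "pmf p sums (1::real)" for p :: "nat pmf"
proof -
  have "(\<integral>\<^sup>+ x. ennreal (pmf p x) \<partial>count_space UNIV) = 1"
    using nn_integral_measure_pmf[of p "\<lambda>_. 1"] by (simp add: measure_pmf.emeasure_space_1)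
  then have sum_1: "(\<Sum>x. ennreal (pmf p x)) = 1"
    by (simp add: nn_integral_count_space_nat)
  then have summable: "summable (pmf p)"
    by (intro summable_suminf_not_top) auto
  have "ennreal (\<Sum>x. pmf p x) = 1"
    using sum_1 suminf_ennreal2[of "pmf p", OF pmf_nonneg summable] by simp
  then show ?thesis
    using summable by (simp add: sums_iff ennreal_eq_1)
qed

locale schloegl =
  fixes g :: "nat \<Rightarrow> real"
  assumes g1_pos: "g 1 > 0" and g2_pos: "g 2 > 0" and g3_pos: "g 3 > 0" and g4_pos: "g 4 > 0"
begin

lemma alpha_nonneg: "alpha g j x \<ge> 0"
  using g1_pos g2_pos g3_pos g4_pos falling2_nonneg[of x] falling3_nonneg[of x]
  unfolding alpha_def by (auto simp: mult.assoc)

lemma alpha4_pos: "x \<ge> 3 \<Longrightarrow> alpha g 4 x > 0"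
  using g4_pos by (simp add: alpha_def)

lemma mu_pos: "mu g x > 0"
  using alpha_nonneg[of 2 x] alpha_nonneg[of 3 x] alpha_nonneg[of 4 x] g1_pos
  unfolding mu_eq_sum_alpha by (simp add: alpha_def)

lemma p_up_add_p_down: "p_up g x + p_down g x = 1"
proof -
  have "p_up g x + p_down g x = mu g x / mu g x"
    unfolding p_up_eq p_down_eq add_divide_distrib[symmetric] by (simp add: mu_eq_sum_alpha ac_simps)
  then show ?thesis
    using mu_pos[of x] by simp
qed

lemma p_up_nonneg: "p_up g x \<ge> 0"
  using mu_pos[of x] alpha_nonneg unfolding p_up_eq by simp

lemma p_down_nonneg: "p_down g x \<ge> 0"
  using mu_pos[of x] alpha_nonneg unfolding p_down_eq by simp

lemma p_up_pos: "p_up g x > 0"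
  using mu_pos[of x] alpha_nonneg[of 3 x] g1_pos unfolding p_up_eq by (simp add: alpha_def)

lemma p_down_pos:
  assumes "x > 0"
  shows "p_down g x > 0"
proof -
  have "alpha g 2 x > 0"
    using assms g2_pos by (simp add: alpha_def)
  then show ?thesis
    using mu_pos[of x] alpha_nonneg[of 4 x] unfolding p_down_eq by simp
qed

lemma p_up_0: "p_up g 0 = 1"
  using g1_pos unfolding p_up_def mu_def by simp

lemma trans_P_nonneg: "trans_P g x y \<ge> 0"
  using p_up_nonneg[of x] p_down_nonneg[of x] unfolding trans_P_def p_up_def p_down_def by auto

lemma step_cases: "u < 1 \<Longrightarrow> step g x u = Suc x \<or> (x > 0 \<and> step g x u = x - 1)"
  using g1_pos by (cases x) (auto simp: step_eq_if kappa_explicit alpha_def mu_def)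

lemma step_0: "u < 1 \<Longrightarrow> step g 0 u = 1"
  using step_cases[of u 0] by auto

lemma kappa_thresholds_ordered:
  "0 \<le> alpha g 1 x / mu g x"
  "alpha g 1 x / mu g x \<le> (alpha g 1 x + alpha g 2 x) / mu g x"
  "(alpha g 1 x + alpha g 2 x) / mu g x \<le> (alpha g 1 x + alpha g 2 x + alpha g 3 x) / mu g x"
  "(alpha g 1 x + alpha g 2 x + alpha g 3 x) / mu g x \<le> 1"
  using mu_pos[of x] alpha_nonneg[of _ x] by (auto simp: divide_right_mono mu_eq_sum_alpha field_simps)

lemma step_up_set:
  "{u \<in> {0..<1}. step g x u = Suc x} =
     {0..<alpha g 1 x / mu g x} \<union>
     {(alpha g 1 x + alpha g 2 x) / mu g x..<(alpha g 1 x + alpha g 2 x + alpha g 3 x) / mu g x}"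
  (is "_ = {0..<?c1} \<union> {?c2..<?c3}")
proof -
  have "(u * mu g x < c) = (u < c / mu g x)" for u c
    using mu_pos[of x] by (simp add: pos_less_divide_eq)
  then have kappa: "kappa g x u = (if u < ?c1 then 1 else if u < ?c2 then 2 else if u < ?c3 then 3 else 4)"
    for u unfolding kappa_explicit by presburger
  show ?thesis
    using kappa_thresholds_ordered[of x] unfolding step_eq_if kappa by auto
qed

lemma measure_step_up: "measure unif01 {u \<in> {0..<1}. step g x u = Suc x} = p_up g x"
proof -
  define c1 c2 c3 where "c1 = alpha g 1 x / mu g x"
    and "c2 = (alpha g 1 x + alpha g 2 x) / mu g x"
    and "c3 = (alpha g 1 x + alpha g 2 x + alpha g 3 x) / mu g x"
  note ordered = kappa_thresholds_ordered[of x, folded c1_def c2_def c3_def]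
  have "measure unif01 {u \<in> {0..<1}. step g x u = Suc x} = measure lborel ({0..<c1} \<union> {c2..<c3})"
    unfolding step_up_set c1_def[symmetric] c2_def[symmetric] c3_def[symmetric]
    using ordered by (intro measure_unif01) auto
  also have "\<dots> = c1 + (c3 - c2)"
    using ordered by (subst measure_Union) auto
  also have "\<dots> = p_up g x"
    unfolding c1_def c2_def c3_def p_up_eq by (simp add: diff_divide_distrib add_divide_distrib)
  finally show ?thesis .
qed

lemma measure_step_eq: "measure unif01 {u \<in> {0..<1}. step g x u = z} = trans_P g x z"
proof -
  consider "z = Suc x" | "x = Suc z" | "z \<noteq> Suc x" "x \<noteq> Suc z"
    by blast
  then show ?thesis
  proof cases
    case 1
    then show ?thesis
      using measure_step_up trans_P_Suc_right by simp
  next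
    case 2
    let ?U = "{u \<in> {0..<1}. step g x u = Suc x}"
    have "{u \<in> {0..<1}. step g x u = z} = {0..<1} - ?U"
      using 2 by (auto simp: step_eq_if)
    moreover have "measure unif01 ({0..<1} - ?U) = measure unif01 {0..<1} - measure unif01 ?U"
      using step_set_sets_unif01 prob_space.finite_measure[OF prob_space_unif01]
      by (intro finite_measure.finite_measure_Diff) (auto simp: sets_unif01_iff)
    moreover have "measure unif01 {0..<1} = 1"
      by (subst measure_unif01) auto
    ultimately show ?thesis
      using 2 measure_step_up p_up_add_p_down[of x] trans_P_Suc_left[of g z] by simp
  next
    case 3
    then have no_step: "{u \<in> {0..<1}. step g x u = z} = {}"
      using step_cases by fastforce
    have "trans_P g x z = 0"
      using 3 by (rule trans_P_eq_0)
    then show ?thesis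
      by (simp only: no_step measure_empty)
  qed
qed

section \<open>The stationary distribution\<close>

lemma p_up_le_quarter:
  assumes "real x \<ge> 2 + 3 * (g 1 + g 3) / g 4"
  shows "p_up g x \<le> 1 / 4"
proof -
  define y where "y = real x"
  define Y where "Y = y * (y - 1)"
  have "3 * (g 1 + g 3) / g 4 \<ge> 0"
    using g1_pos g3_pos g4_pos by simp
  then have "y \<ge> 2"
    using assms unfolding y_def by linarith
  then have "Y \<ge> 1"
    unfolding Y_def using mult_mono[of 1 y 1 "y - 1"] by simp
  have far: "3 * (g 1 + g 3) \<le> (y - 2) * g 4"
    using assms g4_pos unfolding y_def by (simp add: field_simps)
  have "g 1 \<le> g 1 * Y"
    using mult_left_mono[OF \<open>Y \<ge> 1\<close>, of "g 1"] g1_pos by simp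
  then have "3 * (g 1 + g 3 * Y) \<le> 3 * (g 1 + g 3) * Y"
    by (simp add: algebra_simps)
  also have "\<dots> \<le> (y - 2) * g 4 * Y"
    using far \<open>Y \<ge> 1\<close> by (intro mult_right_mono) auto
  finally have "3 * (g 1 + g 3 * Y) \<le> (y - 2) * g 4 * Y" .
  moreover have "0 \<le> g 2 * y"
    using g2_pos \<open>y \<ge> 2\<close> by simp
  ultimately have "4 * (g 1 + g 3 * Y) \<le> mu g x"
    unfolding mu_def y_def[symmetric] Y_def by (simp add: algebra_simps)
  then show ?thesis
    using mu_pos[of x] unfolding p_up_def y_def[symmetric] Y_def by (simp add: field_simps)
qed

primrec weight :: "nat \<Rightarrow> real" where
  "weight 0 = 1"
| "weight (Suc n) = weight n * p_up g n / p_down g (Suc n)"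

lemma weight_pos: "weight n > 0"
  by (induction n) (auto intro!: divide_pos_pos mult_pos_pos p_up_pos p_down_pos)

lemma weight_balance: "weight n * p_up g n = weight (Suc n) * p_down g (Suc n)"
  using p_down_pos[of "Suc n"] by simp

lemma summable_weight: "summable weight"
proof -
  obtain N :: nat where N: "real N \<ge> 2 + 3 * (g 1 + g 3) / g 4"
    using real_arch_simple by blast
  show ?thesis
  proof (rule summable_ratio_test[where c = "1/2" and N = N])
    fix n assume "n \<ge> N"
    then have "real n \<ge> 2 + 3 * (g 1 + g 3) / g 4" "real (Suc n) \<ge> 2 + 3 * (g 1 + g 3) / g 4"
      using N by auto
    then have "p_up g n \<le> 1/4" "p_up g (Suc n) \<le> 1/4"
      by (simp_all only: p_up_le_quarter)
    then have "p_up g n / p_down g (Suc n) \<le> 1/2"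
      using p_up_add_p_down[of "Suc n"] p_up_nonneg[of n] by (simp add: field_simps)
    then have "weight n * (p_up g n / p_down g (Suc n)) \<le> weight n * (1/2)"
      using weight_pos[of n] by (intro mult_left_mono) auto
    then have "weight (Suc n) \<le> weight n * (1/2)"
      by simp
    then show "norm (weight (Suc n)) \<le> 1/2 * norm (weight n)"
      using weight_pos[of n] weight_pos[of "Suc n"] by simp
  qed simp
qed

definition stat_dist :: "nat \<Rightarrow> real" where
  "stat_dist x = weight x / (\<Sum>n. weight n)"

lemma suminf_weight_pos: "(\<Sum>n. weight n) > 0"
  using summable_weight weight_pos by (rule suminf_pos)

lemma stat_dist_pos: "stat_dist x > 0"
  unfolding stat_dist_def using weight_pos suminf_weight_pos by simp

lemma stat_dist_balance: "stat_dist n * p_up g n = stat_dist (Suc n) * p_down g (Suc n)"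
  unfolding stat_dist_def using weight_balance[of n] by (metis mult.commute times_divide_eq_right)

lemma stat_dist_sums_1: "stat_dist sums 1"
  unfolding stat_dist_def
  using sums_divide[OF summable_sums[OF summable_weight], of "\<Sum>n. weight n"] suminf_weight_pos by simp

lemma stat_dist_stationary: "(\<Sum>x. stat_dist x * trans_P g x y) = stat_dist y"
proof (cases y)
  case 0
  then show ?thesis
    unfolding suminf_mult_trans_P using stat_dist_balance[of 0] p_up_0 by simp
next
  case (Suc m)
  have "stat_dist m * p_up g m + stat_dist (Suc (Suc m)) * p_down g (Suc (Suc m))
      = stat_dist (Suc m) * (p_up g (Suc m) + p_down g (Suc m))"
    using stat_dist_balance[of m] stat_dist_balance[of "Suc m"] by (simp add: algebra_simps)
  then show ?thesis
    unfolding suminf_mult_trans_P using Suc p_up_add_p_down[of "Suc m"] by simp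
qed

lemma stationary_balance:
  assumes "stationary g p"
  shows "pmf p (Suc n) * p_down g (Suc n) = pmf p n * p_up g n"
proof (induction n)
  case 0
  show ?case
    using assms[unfolded stationary_def, rule_format, of 0] p_up_0
    unfolding suminf_mult_trans_P by simp
next
  case (Suc n)
  have "pmf p (Suc n) = pmf p n * p_up g n + pmf p (Suc (Suc n)) * p_down g (Suc (Suc n))"
    using assms[unfolded stationary_def, rule_format, of "Suc n"] unfolding suminf_mult_trans_P by simp
  moreover have "pmf p (Suc n) * p_up g (Suc n) + pmf p (Suc n) * p_down g (Suc n) = pmf p (Suc n)"
    using p_up_add_p_down[of "Suc n"] by (simp flip: distrib_left)
  ultimately show ?case
    using Suc.IH by linarith
qed

lemma stationary_eq_stat_dist:
  assumes "stationary g p"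
  shows "pmf p x = stat_dist x"
proof -
  define c where "c = pmf p 0"
  have multiple: "pmf p n = c * weight n" for n
  proof (induction n)
    case (Suc n)
    have "pmf p (Suc n) = pmf p n * p_up g n / p_down g (Suc n)"
      using stationary_balance[OF assms, of n] p_down_pos[of "Suc n"] by (simp add: field_simps)
    then show ?case
      using Suc.IH by simp
  qed (simp add: c_def)
  have "(\<lambda>n. c * weight n) sums (c * (\<Sum>n. weight n))"
    using summable_weight by (intro sums_mult summable_sums)
  moreover have "(\<lambda>n. c * weight n) sums 1"
    using pmf_nat_sums_1[of p] unfolding multiple .
  ultimately have "c = 1 / (\<Sum>n. weight n)"
    using suminf_weight_pos sums_unique2 by (fastforce simp: field_simps)
  then show ?thesis
    unfolding multiple stat_dist_def by simp
qed

lemma ex1_stationary: "\<exists>!p :: nat pmf. stationary g p"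
proof (rule ex1I)
  let ?p = "embed_pmf stat_dist"
  have "(\<integral>\<^sup>+ x. ennreal (stat_dist x) \<partial>count_space UNIV) = 1"
    using stat_dist_sums_1 stat_dist_pos
    by (simp add: nn_integral_count_space_nat suminf_ennreal2 less_imp_le sums_iff)
  then have pmf_p: "pmf ?p x = stat_dist x" for x
    using stat_dist_pos by (subst pmf_embed_pmf) (auto simp: less_imp_le)
  show "stationary g ?p"
    unfolding stationary_def pmf_p using stat_dist_stationary by simp
  show "p = ?p" if "stationary g p" for p
    using stationary_eq_stat_dist[OF that] by (intro pmf_eqI) (simp add: pmf_p)
qed

end

interpretation noise: prob_space noise
  unfolding noise_eq_PiM by (intro prob_space_PiM prob_space_unif01)

interpretation noise_factors: product_prob_space "\<lambda>_::int. unif01" UNIV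
  by (simp add: product_prob_space_def product_prob_space_axioms_def product_sigma_finite_def
      prob_space_unif01 prob_space_imp_sigma_finite)

lemma space_noise: "space noise = {q. \<forall>i. q i \<in> {0..1}}"
  by (auto simp: noise_eq_PiM space_PiM space_unif01 PiE_def extensional_def)

lemma coordinate_measurable [measurable]: "(\<lambda>q. q i) \<in> noise \<rightarrow>\<^sub>M unif01"
  unfolding noise_eq_PiM by simp

lemma coordinate_borel_measurable [measurable]: "(\<lambda>q. q i) \<in> borel_measurable noise"
  using coordinate_measurable
  by (rule measurable_compose) (simp add: unif01_def measurable_restrict_space1)

lemma measure_coordinate:
  "S \<in> sets unif01 \<Longrightarrow> measure noise {q \<in> space noise. q i \<in> S} = measure unif01 S"
  using noise_factors.emeasure_PiM_Collect_single[of i S] unfolding noise_eq_PiM[symmetric]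
  by (simp add: measure_def)

lemma funpow_measurable: "f \<in> M \<rightarrow>\<^sub>M M \<Longrightarrow> (f ^^ n) \<in> M \<rightarrow>\<^sub>M M"
  by (induction n) auto

lemma distr_funpow:
  assumes "f \<in> M \<rightarrow>\<^sub>M M" "distr M M f = M"
  shows "distr M M (f ^^ n) = M"
proof (induction n)
  case (Suc n)
  have "distr M M (f ^^ Suc n) = distr (distr M M (f ^^ n)) M f"
    using assms(1) funpow_measurable[OF assms(1)] by (subst distr_distr) (auto simp: comp_def)
  also have "\<dots> = M"
    using Suc assms(2) by simp
  finally show ?case .
qed (simp add: id_def)

definition ishift :: "(int \<Rightarrow> real) \<Rightarrow> (int \<Rightarrow> real)" where
  "ishift q = (\<lambda>n. q (n - 1))"

lemma funpow_shift_apply: "(shift ^^ n) q = (\<lambda>i. q (i + int n))"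
  by (induction n arbitrary: q) (auto simp: shift_def algebra_simps)

lemma funpow_ishift_apply: "(ishift ^^ n) q = (\<lambda>i. q (i - int n))"
  by (induction n arbitrary: q) (auto simp: ishift_def algebra_simps)

lemma shift_measurable [measurable]: "shift \<in> noise \<rightarrow>\<^sub>M noise"
  unfolding noise_eq_PiM shift_def by (rule measurable_PiM_single') (auto simp: space_PiM)

lemma ishift_measurable [measurable]: "ishift \<in> noise \<rightarrow>\<^sub>M noise"
  unfolding noise_eq_PiM ishift_def by (rule measurable_PiM_single') (auto simp: space_PiM)

lemma funpow_shift_measurable [measurable]: "(shift ^^ n) \<in> noise \<rightarrow>\<^sub>M noise"
  by (intro funpow_measurable shift_measurable)

lemma funpow_ishift_measurable [measurable]: "(ishift ^^ n) \<in> noise \<rightarrow>\<^sub>M noise"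
  by (intro funpow_measurable ishift_measurable)

lemma distr_noise_translate: "distr noise noise (\<lambda>q i. q (i + c)) = noise"
  using distr_PiM_reindex[of UNIV "\<lambda>_. unif01" "\<lambda>i. i + c" UNIV] prob_space_unif01
  by (simp add: noise_eq_PiM restrict_UNIV inj_on_def)

lemma measure_funpow_shift_vimage:
  "S \<in> sets noise \<Longrightarrow> measure noise ((shift ^^ n) -` S \<inter> space noise) = measure noise S"
  using measure_distr[OF funpow_shift_measurable, of S n]
    distr_funpow[OF shift_measurable distr_noise_translate[of 1, folded shift_def]]
  by simp

lemma measure_funpow_ishift_vimage:
  "S \<in> sets noise \<Longrightarrow> measure noise ((ishift ^^ n) -` S \<inter> space noise) = measure noise S"
  using measure_distr[OF funpow_ishift_measurable, of S n]
    distr_funpow[OF ishift_measurable distr_noise_translate[of "-1", simplified, folded ishift_def]]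
  by simp

lemma funpow_shift_ishift: "(shift ^^ n) ((ishift ^^ n) q) = q"
  by (simp add: funpow_shift_apply funpow_ishift_apply)

lemma funpow_shift_in_space: "q \<in> space noise \<Longrightarrow> (shift ^^ n) q \<in> space noise"
  by (simp add: space_noise funpow_shift_apply)

lemma funpow_ishift_in_space: "q \<in> space noise \<Longrightarrow> (ishift ^^ n) q \<in> space noise"
  by (simp add: space_noise funpow_ishift_apply)

lemma measure_funpow_ishift_Collect:
  assumes "Measurable.pred noise P"
  shows "measure noise {q \<in> space noise. P ((ishift ^^ n) q)} = measure noise {q \<in> space noise. P q}"
proof -
  have "{q \<in> space noise. P ((ishift ^^ n) q)} = (ishift ^^ n) -` {q \<in> space noise. P q} \<inter> space noise"
    using funpow_ishift_in_space by auto
  then show ?thesis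
    using measure_funpow_ishift_vimage[of "{q \<in> space noise. P q}" n] assms by simp
qed

definition depends_on :: "int set \<Rightarrow> (int \<Rightarrow> real) set \<Rightarrow> bool" where
  "depends_on I E \<longleftrightarrow> E \<subseteq> space noise \<and>
     (\<forall>q\<in>space noise. \<forall>q'\<in>space noise. (\<forall>i\<in>I. q i = q' i) \<longrightarrow> (q \<in> E \<longleftrightarrow> q' \<in> E))"

lemma depends_on_coordinate: "depends_on {i} {q \<in> space noise. P (q i)}"
  unfolding depends_on_def by auto

definition extend0 :: "int set \<Rightarrow> (int \<Rightarrow> real) \<Rightarrow> (int \<Rightarrow> real)" where
  "extend0 I r = (\<lambda>i. if i \<in> I then r i else 0)"

lemma extend0_measurable: "extend0 I \<in> PiM I (\<lambda>_. unif01) \<rightarrow>\<^sub>M noise"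
  unfolding noise_eq_PiM extend0_def
proof (rule measurable_PiM_single')
  show "(\<lambda>r. if i \<in> I then r i else 0) \<in> PiM I (\<lambda>_. unif01) \<rightarrow>\<^sub>M unif01" for i
    by (cases "i \<in> I") (auto simp: space_unif01)
qed (auto simp: space_PiM space_unif01 PiE_iff)

lemma depends_on_restrict_vimage:
  assumes "depends_on I E" "E \<in> sets noise"
  obtains E' where "E' \<in> sets (PiM I (\<lambda>_. unif01))" "E = (\<lambda>q. restrict q I) -` E' \<inter> space noise"
proof
  let ?E' = "{r \<in> space (PiM I (\<lambda>_. unif01)). extend0 I r \<in> E}"
  show "?E' \<in> sets (PiM I (\<lambda>_. unif01))"
    using measurable_sets[OF extend0_measurable assms(2)] by (simp add: vimage_def Int_def conj_commute)
  have "q \<in> E \<longleftrightarrow> extend0 I (restrict q I) \<in> E" if q: "q \<in> space noise" for q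
  proof -
    have "extend0 I (restrict q I) \<in> space noise"
      using q by (auto simp: space_noise extend0_def)
    moreover have "\<forall>i\<in>I. q i = extend0 I (restrict q I) i"
      by (simp add: extend0_def)
    ultimately show ?thesis
      using assms(1) q unfolding depends_on_def by blast
  qed
  moreover have "restrict q I \<in> space (PiM I (\<lambda>_. unif01))" if "q \<in> space noise" for q
    using that by (simp add: space_PiM space_noise space_unif01)
  ultimately show "E = (\<lambda>q. restrict q I) -` ?E' \<inter> space noise"
    using assms(1) unfolding depends_on_def by blast
qed

lemma indep_vars_coordinates: "noise.indep_vars (\<lambda>_. unif01) (\<lambda>i q. q i) UNIV"
proof -
  have "distr noise (PiM UNIV (\<lambda>_. unif01)) (\<lambda>x. \<lambda>i\<in>UNIV. x i)
      = PiM UNIV (\<lambda>i. distr noise unif01 (\<lambda>q. q i))"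
    unfolding restrict_UNIV noise_eq_PiM using noise_factors.PiM_component by simp
  then show ?thesis
    by (subst noise.indep_vars_iff_distr_eq_PiM) (auto simp: noise_eq_PiM)
qed

lemma measure_Int_depends_on_disjoint:
  assumes "depends_on I E" "E \<in> sets noise" "depends_on J F" "F \<in> sets noise" "I \<inter> J = {}"
  shows "measure noise (E \<inter> F) = measure noise E * measure noise F"
proof -
  obtain E' where E': "E' \<in> sets (PiM I (\<lambda>_. unif01))" "E = (\<lambda>q. restrict q I) -` E' \<inter> space noise"
    using depends_on_restrict_vimage[OF assms(1,2)] .
  obtain F' where F': "F' \<in> sets (PiM J (\<lambda>_. unif01))" "F = (\<lambda>q. restrict q J) -` F' \<inter> space noise"
    using depends_on_restrict_vimage[OF assms(3,4)] .
  have "noise.indep_var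
      (PiM I (\<lambda>_. unif01)) (\<lambda>q. restrict q I) (PiM J (\<lambda>_. unif01)) (\<lambda>q. restrict q J)"
    using noise.indep_var_restrict[OF indep_vars_coordinates assms(5)] by simp
  from noise.indep_varD[OF this E'(1) F'(1)] show ?thesis
    unfolding E'(2) F'(2) by (simp add: vimage_def Int_def conj_ac)
qed

text \<open>
  At a noise value 1 the state 0 stays put (\<open>kappa\<close> falls back to 4); on regular
  noise every step changes the state by exactly one.
\<close>

definition regular_noise :: "(int \<Rightarrow> real) \<Rightarrow> bool" where
  "regular_noise q \<longleftrightarrow> (\<forall>i. q i < 1)"

lemma regular_noise_measurable [measurable]: "Measurable.pred noise regular_noise"
  unfolding regular_noise_def by measurable

lemma AE_regular_noise: "AE q in noise. regular_noise q"
proof -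
  have "measure noise {q \<in> space noise. q i \<in> {1}} = 0" for i
    using measure_coordinate[of "{1}" i] by (simp add: sets_unif01_iff measure_unif01)
  then have "{q \<in> space noise. q i = 1} \<in> null_sets noise" for i
    by (simp add: noise.emeasure_eq_measure null_sets_def)
  then have "(\<Union>i. {q \<in> space noise. q i = 1}) \<in> null_sets noise"
    by (intro null_sets_UN') auto
  moreover have "{q \<in> space noise. \<not> regular_noise q} \<subseteq> (\<Union>i. {q \<in> space noise. q i = 1})"
  proof
    fix q assume "q \<in> {q \<in> space noise. \<not> regular_noise q}"
    then obtain i where "q \<in> space noise" "\<not> q i < 1"
      by (auto simp: regular_noise_def)
    moreover from this have "q i \<le> 1"
      by (simp add: space_noise)
    ultimately show "q \<in> (\<Union>i. {q \<in> space noise. q i = 1})"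
      by (intro UN_I[of i]) auto
  qed
  ultimately show ?thesis
    by (rule AE_I')
qed

lemma regular_noise_lt_1: "regular_noise q \<Longrightarrow> q i < 1"
  unfolding regular_noise_def by blast

lemma regular_noise_funpow_shift: "regular_noise q \<Longrightarrow> regular_noise ((shift ^^ n) q)"
  by (simp add: regular_noise_def funpow_shift_apply)

lemma regular_noise_funpow_ishift: "regular_noise q \<Longrightarrow> regular_noise ((ishift ^^ n) q)"
  by (simp add: regular_noise_def funpow_ishift_apply)

lemma phi_Suc_step: "phi g (Suc n) q x = step g (phi g n q x) (q (int n))"
  by (simp add: fstep_eq_step funpow_shift_apply)

declare phi.simps(2) [simp del] phi_Suc_step [simp]

lemma phi_add: "phi g (m + n) q x = phi g n ((shift ^^ m) q) (phi g m q x)"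
  by (induction n) (auto simp: funpow_shift_apply ac_simps)

lemma phi_cong:
  "(\<And>i. 0 \<le> i \<Longrightarrow> i < int n \<Longrightarrow> q i = q' i) \<Longrightarrow> phi g n q x = phi g n q' x"
  by (induction n) auto

lemma phi_le_add: "phi g n q x \<le> x + n"
  by (induction n) (auto intro: order.trans[OF step_le_Suc])

lemma phi_measurable [measurable]: "(\<lambda>q. phi g n q x) \<in> noise \<rightarrow>\<^sub>M count_space UNIV"
proof (induction n)
  case (Suc n)
  have "(\<lambda>q. step g y (q (int n))) \<in> noise \<rightarrow>\<^sub>M count_space UNIV" for y
    by measurable
  then show ?case
    unfolding phi_Suc_step by (rule measurable_compose_countable[OF _ Suc])
qed simp

lemma depends_on_phi: "depends_on {0..<int n} {q \<in> space noise. P (phi g n q x) (phi g n q y)}"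
  unfolding depends_on_def
proof (intro conjI ballI impI)
  fix q q' assume q: "q \<in> space noise" "q' \<in> space noise" and "\<forall>i\<in>{0..<int n}. q i = q' i"
  then have "phi g n q x = phi g n q' x" "phi g n q y = phi g n q' y"
    by (auto intro!: phi_cong)
  then show "q \<in> {q \<in> space noise. P (phi g n q x) (phi g n q y)} \<longleftrightarrow>
      q' \<in> {q \<in> space noise. P (phi g n q x) (phi g n q y)}"
    using q by simp
qed auto

lemma (in finite_measure) measure_UN_le_of_incseq:
  assumes "range A \<subseteq> sets M" "incseq A" "\<And>i. measure M (A i) \<le> C"
  shows "measure M (\<Union>i. A i) \<le> C"
  using LIMSEQ_le_const2[OF finite_Lim_measure_incseq[OF assms(1,2)]] assms(3) by blast

lemma decseq_tendsto_0_by_decrements: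
  fixes d :: "nat \<Rightarrow> real"
  assumes "decseq d" "\<And>n. d n \<ge> 0"
    and decrement:
      "\<And>r. r > 0 \<Longrightarrow> \<exists>L \<delta>. \<delta> > 0 \<and> (\<forall>k. d k \<ge> r \<longrightarrow> d (k + L) \<le> d k - \<delta>)"
  shows "d \<longlonglongrightarrow> 0"
proof -
  obtain l where lim: "d \<longlonglongrightarrow> l" and below: "\<And>n. l \<le> d n"
    using decseq_convergent[OF assms(1), of 0] assms(2) by blast
  have "l \<ge> 0"
    using lim assms(2) by (intro LIMSEQ_le_const) auto
  moreover have "\<not> l > 0"
  proof
    assume "l > 0"
    then obtain L \<delta> where "\<delta> > 0" and step: "\<And>k. d (k + L) \<le> d k - \<delta>"
      using decrement[of l] below by blast
    have descent: "d (j * L) \<le> d 0 - real j * \<delta>" for j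
    proof (induction j)
      case (Suc j)
      have "d (j * L + L) \<le> d (j * L) - \<delta>"
        by (rule step)
      then show ?case
        using Suc.IH by (simp add: add.commute algebra_simps)
    qed simp
    obtain j :: nat where "d 0 < real j * \<delta>"
      using reals_Archimedean3[OF \<open>\<delta> > 0\<close>] by blast
    then show False
      using descent[of j] assms(2)[of "j * L"] by linarith
  qed
  ultimately show ?thesis
    using lim by simp
qed

lemma incseq_bounded_eventually_Least:
  fixes s :: "nat \<Rightarrow> nat"
  assumes "incseq s" "\<And>m. s m \<le> B"
  shows "eventually (\<lambda>m. s m = (LEAST k. \<forall>m. s m \<le> k)) sequentially"
proof -
  define L where "L = (LEAST k. \<forall>m. s m \<le> k)"
  have bound: "s m \<le> L" for m
    unfolding L_def using LeastI[of "\<lambda>k. \<forall>m. s m \<le> k" B] assms(2) by blast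
  obtain M where "s M \<ge> L"
  proof (cases "L = 0")
    case False
    have "\<not> (\<forall>m. s m \<le> L - 1)"
    proof
      assume "\<forall>m. s m \<le> L - 1"
      then have "L \<le> L - 1"
        unfolding L_def by (rule Least_le)
      then show False
        using False by simp
    qed
    then obtain M where "L - 1 < s M"
      by (auto simp: not_le)
    then show ?thesis
      using False by (intro that[of M]) arith
  qed (use that in auto)
  then have "\<forall>m\<ge>M. s m = L"
    using bound assms(1) by (metis incseq_def order.antisym order.trans)
  then show ?thesis
    unfolding L_def[symmetric] eventually_sequentially by blast
qed

lemma eventually_const_unique:
  fixes s :: "nat \<Rightarrow> nat"
  assumes "eventually (\<lambda>m. s m = a) sequentially" "eventually (\<lambda>m. s m = b) sequentially"
  shows "a = b"
  using LIMSEQ_unique[OF tendsto_eventually[OF assms(1)] tendsto_eventually[OF assms(2)]] .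

lemma pt_dist_eq_Min:
  assumes "finite T" "T \<noteq> {}"
  shows "pt_dist x T = Min ((\<lambda>y. \<bar>real x - real y\<bar>) ` T)"
  unfolding pt_dist_def using assms by (simp add: cInf_eq_Min)

lemma pt_dist_eq_0: "x \<in> T \<Longrightarrow> pt_dist x T = 0"
  unfolding pt_dist_def by (rule cInf_eq_minimum) auto

lemma mem_if_pt_dist_lt_1:
  assumes "finite T" "T \<noteq> {}" "pt_dist x T < 1"
  shows "x \<in> T"
proof -
  have "pt_dist x T \<in> (\<lambda>y. \<bar>real x - real y\<bar>) ` T"
    unfolding pt_dist_eq_Min[OF assms(1,2)] using assms(1,2) by (intro Min_in) auto
  then obtain y where "y \<in> T" "pt_dist x T = \<bar>real x - real y\<bar>"
    by auto
  moreover from this have "x = y"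
    using assms(3) by linarith
  ultimately show ?thesis
    by simp
qed

lemma mem_iff_pt_dist_eq_0: "finite T \<Longrightarrow> T \<noteq> {} \<Longrightarrow> x \<in> T \<longleftrightarrow> pt_dist x T = 0"
  using pt_dist_eq_0 mem_if_pt_dist_lt_1 by fastforce

lemma pt_dist_le_set_dist: "finite S \<Longrightarrow> x \<in> S \<Longrightarrow> pt_dist x T \<le> set_dist S T"
  unfolding set_dist_def by (intro cSup_upper) auto

lemma set_dist_gt_iff:
  assumes "finite S" "e > 0"
  shows "set_dist S T > e \<longleftrightarrow> (\<exists>x\<in>S. pt_dist x T > e)"
  unfolding set_dist_def using assms by (simp add: cSup_eq_Max Max_gr_iff)

section \<open>Any two weak attractors coincide almost surely\<close>

lemma weak_attractor_mem_measurable: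
  assumes "weak_attractor g A"
  shows "Measurable.pred noise (\<lambda>q. x \<in> A q)"
proof -
  have "(\<lambda>q. pt_dist x (A q)) \<in> borel_measurable noise"
    using assms unfolding weak_attractor_def by blast
  then have "Measurable.pred noise (\<lambda>q. pt_dist x (A q) = 0)"
    by measurable
  moreover have "x \<in> A q \<longleftrightarrow> pt_dist x (A q) = 0" if "q \<in> space noise" for q
    using assms that unfolding weak_attractor_def by (intro mem_iff_pt_dist_eq_0) auto
  ultimately show ?thesis
    by (subst measurable_cong) auto
qed

lemma weak_attractor_unbounded_tendsto_0:
  assumes "weak_attractor g A"
  shows "(\<lambda>N. measure noise {q \<in> space noise. \<not> A q \<subseteq> {..N}}) \<longlonglongrightarrow> 0"
proof -
  define R where "R N = {q \<in> space noise. \<exists>x. N < x \<and> x \<in> A q}" for N :: nat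
  note [measurable] = weak_attractor_mem_measurable[OF assms]
  have "R N \<in> sets noise" for N
    unfolding R_def by measurable
  then have "range R \<subseteq> sets noise"
    by blast
  moreover have "decseq R"
    by (rule decseq_SucI) (auto simp: R_def dest: Suc_lessD)
  moreover have "(\<Inter>N. R N) = {}"
  proof (intro equals0I)
    fix q assume q: "q \<in> (\<Inter>N. R N)"
    then have "finite (A q)"
      using assms unfolding weak_attractor_def R_def by auto
    moreover obtain x where "Max (A q) < x" "x \<in> A q"
      using q unfolding R_def by blast
    ultimately show False
      using Max_ge[of "A q" x] by linarith
  qed
  ultimately have "(\<lambda>N. measure noise (R N)) \<longlonglongrightarrow> 0"
    using noise.finite_Lim_measure_decseq[of R] by simp
  moreover have "R N = {q \<in> space noise. \<not> A q \<subseteq> {..N}}" for N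
    unfolding R_def by (auto simp: not_le)
  ultimately show ?thesis
    by simp
qed

lemma weak_attractor_escape:
  assumes "weak_attractor g A" "weak_attractor g A'"
  shows "AE q in noise. \<not> A ((shift ^^ n) q) \<subseteq> A' ((shift ^^ n) q) \<longrightarrow>
           \<not> A q \<subseteq> {..N} \<or> set_dist (phi g n q ` {..N}) (A' ((shift ^^ n) q)) > 1 / 2"
proof -
  have "AE q in noise. \<forall>n. phi g n q ` A q = A ((shift ^^ n) q)"
    using assms(1) unfolding weak_attractor_def by blast
  with AE_space show ?thesis
  proof eventually_elim
    case (elim q)
    have "A ((shift ^^ n) q) \<subseteq> A' ((shift ^^ n) q)"
      if "A q \<subseteq> {..N}" "set_dist (phi g n q ` {..N}) (A' ((shift ^^ n) q)) \<le> 1 / 2"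
    proof
      fix y assume "y \<in> A ((shift ^^ n) q)"
      then have "y \<in> phi g n q ` {..N}"
        using elim that(1) by blast
      then have "pt_dist y (A' ((shift ^^ n) q)) < 1"
        using pt_dist_le_set_dist[of "phi g n q ` {..N}" y "A' ((shift ^^ n) q)"] that(2) by simp
      then show "y \<in> A' ((shift ^^ n) q)"
        using assms(2) funpow_shift_in_space[OF elim(1)] unfolding weak_attractor_def
        by (blast intro: mem_if_pt_dist_lt_1)
    qed
    then show ?case
      using not_le by blast
  qed
qed

lemma weak_attractor_AE_subset:
  assumes "weak_attractor g A" "weak_attractor g A'"
  shows "AE q in noise. A q \<subseteq> A' q"
proof -
  note [measurable] = weak_attractor_mem_measurable[OF assms(1)] weak_attractor_mem_measurable[OF assms(2)]
  define S where "S = {q \<in> space noise. \<not> A q \<subseteq> A' q}"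
  define R where "R N = {q \<in> space noise. \<not> A q \<subseteq> {..N}}" for N :: nat
  define E where "E N n = {q \<in> space noise. set_dist (phi g n q ` {..N}) (A' ((shift ^^ n) q)) > 1 / 2}" for N n
  have S_sets: "S \<in> sets noise"
    unfolding S_def subset_iff by measurable
  have R_sets: "R N \<in> sets noise" for N
    unfolding R_def subset_iff by measurable
  have "(\<forall>n. E N n \<in> sets noise) \<and> (\<lambda>n. measure noise (E N n)) \<longlonglongrightarrow> 0" for N
    using assms(2) unfolding weak_attractor_def E_def by (simp only: finite_atMost) (blast intro: divide_pos_pos)
  then have E: "E N n \<in> sets noise" "(\<lambda>n. measure noise (E N n)) \<longlonglongrightarrow> 0" for N n
    by blast+
  have bound: "measure noise S \<le> measure noise (R N) + measure noise (E N n)" for N n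
  proof -
    have "measure noise S = measure noise ((shift ^^ n) -` S \<inter> space noise)"
      using measure_funpow_shift_vimage[OF S_sets] by simp
    also have "\<dots> \<le> measure noise (R N \<union> E N n)"
      using weak_attractor_escape[OF assms, of n N] R_sets E(1)
      by (intro noise.finite_measure_mono_AE) (auto simp: S_def R_def E_def funpow_shift_in_space)
    also have "\<dots> \<le> measure noise (R N) + measure noise (E N n)"
      using R_sets E(1) by (rule measure_Un_le)
    finally show ?thesis .
  qed
  have "measure noise S \<le> measure noise (R N)" for N
  proof (rule LIMSEQ_le_const)
    show "(\<lambda>n. measure noise (R N) + measure noise (E N n)) \<longlonglongrightarrow> measure noise (R N)"
      using tendsto_add[OF tendsto_const E(2)] by simp
  qed (use bound in blast)
  then have "measure noise S \<le> 0"
    using weak_attractor_unbounded_tendsto_0[OF assms(1)] unfolding R_def[symmetric]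
    by (intro LIMSEQ_le_const[of "\<lambda>N. measure noise (R N)"]) auto
  then have "AE q in noise. q \<notin> S"
    using S_sets by (intro AE_not_in) (simp add: noise.emeasure_eq_measure null_sets_def measure_le_0_iff)
  then show ?thesis
    using AE_space by eventually_elim (auto simp: S_def)
qed

context schloegl
begin

section \<open>Tightness of the trajectories\<close>

lemma measure_phi_Suc_eq_le:
  "measure noise {q \<in> space noise. phi g (Suc n) q y = z}
     \<le> (\<Sum>x\<le>Suc z. measure noise {q \<in> space noise. phi g n q y = x} * trans_P g x z)"
proof -
  define E where "E x = {q \<in> space noise. phi g n q y = x}" for x
  define F where "F x = {q \<in> space noise. q (int n) \<in> {u \<in> {0..<1}. step g x u = z}}" for x
  have sets: "E x \<in> sets noise" "F x \<in> sets noise" for x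
    unfolding E_def F_def using step_set_sets_unif01[of g x z] by measurable
  have "AE q in noise.
      q \<in> {q \<in> space noise. phi g (Suc n) q y = z} \<longrightarrow> q \<in> (\<Union>x\<le>Suc z. E x \<inter> F x)"
  proof (rule AE_mp[OF AE_regular_noise AE_I2], intro impI)
    fix q assume q: "regular_noise q" "q \<in> {q \<in> space noise. phi g (Suc n) q y = z}"
    then have "q (int n) \<in> {0..<1}" "step g (phi g n q y) (q (int n)) = z"
      by (auto simp: regular_noise_def space_noise)
    moreover from this have "phi g n q y \<le> Suc z"
      using step_cases[of "q (int n)" "phi g n q y"] by auto
    ultimately show "q \<in> (\<Union>x\<le>Suc z. E x \<inter> F x)"
      using q by (auto simp: E_def F_def)
  qed
  then have "measure noise {q \<in> space noise. phi g (Suc n) q y = z}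
      \<le> measure noise (\<Union>x\<le>Suc z. E x \<inter> F x)"
    using sets by (intro noise.finite_measure_mono_AE) auto
  also have "\<dots> \<le> (\<Sum>x\<le>Suc z. measure noise (E x \<inter> F x))"
    using sets by (intro measure_UNION_le) auto
  also have "\<dots> = (\<Sum>x\<le>Suc z. measure noise (E x) * trans_P g x z)"
  proof (rule sum.cong)
    fix x
    have "measure noise (E x \<inter> F x) = measure noise (E x) * measure noise (F x)"
      using sets depends_on_phi[where n = n and P = "\<lambda>a b. a = x" and x = y and y = y] depends_on_coordinate[of "int n"]
      by (intro measure_Int_depends_on_disjoint[where I = "{0..<int n}" and J = "{int n}"])
         (auto simp: E_def F_def)
    also have "measure noise (F x) = trans_P g x z"
      unfolding F_def by (simp only: measure_coordinate[OF step_set_sets_unif01] measure_step_eq)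
    finally show "measure noise (E x \<inter> F x) = measure noise (E x) * trans_P g x z" .
  qed simp
  finally show ?thesis
    unfolding E_def .
qed

lemma stat_dist_stationary_finite: "(\<Sum>x\<le>Suc z. stat_dist x * trans_P g x z) = stat_dist z"
proof -
  have "(\<Sum>x. stat_dist x * trans_P g x z) = (\<Sum>x\<le>Suc z. stat_dist x * trans_P g x z)"
    by (rule suminf_finite) (auto simp: trans_P_def)
  then show ?thesis
    using stat_dist_stationary by simp
qed

lemma measure_phi_eq_le: "measure noise {q \<in> space noise. phi g n q y = z} \<le> stat_dist z / stat_dist y"
proof (induction n arbitrary: z)
  case 0
  show ?case
    using stat_dist_pos[of y] stat_dist_pos[of z] by (cases "y = z") (simp_all add: noise.prob_space)
next
  case (Suc n)
  have "measure noise {q \<in> space noise. phi g (Suc n) q y = z}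
     \<le> (\<Sum>x\<le>Suc z. measure noise {q \<in> space noise. phi g n q y = x} * trans_P g x z)"
    by (rule measure_phi_Suc_eq_le)
  also have "\<dots> \<le> (\<Sum>x\<le>Suc z. stat_dist x / stat_dist y * trans_P g x z)"
    using Suc by (intro sum_mono mult_right_mono) (auto simp: trans_P_nonneg)
  also have "\<dots> = stat_dist z / stat_dist y"
    using stat_dist_stationary_finite by (simp add: sum_divide_distrib[symmetric])
  finally show ?case .
qed

definition stat_tail :: "nat \<Rightarrow> real" where
  "stat_tail K = (\<Sum>i. stat_dist (i + Suc K))"

lemma stat_tail_tendsto_0: "stat_tail \<longlonglongrightarrow> 0"
proof -
  have "(\<lambda>n. \<Sum>i. stat_dist (i + n)) \<longlonglongrightarrow> 0"
    using suminf_exist_split[OF _ sums_summable[OF stat_dist_sums_1]]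
    by (auto simp: lim_sequentially dist_real_def)
  then show ?thesis
    unfolding stat_tail_def by (rule LIMSEQ_Suc)
qed

lemma measure_phi_gt_le: "measure noise {q \<in> space noise. phi g n q y > K} \<le> stat_tail K / stat_dist y"
proof -
  have "{q \<in> space noise. phi g n q y > K} \<subseteq> (\<Union>z\<in>{K<..y+n}. {q \<in> space noise. phi g n q y = z})"
    using phi_le_add[of g n _ y] by auto
  then have "measure noise {q \<in> space noise. phi g n q y > K}
      \<le> measure noise (\<Union>z\<in>{K<..y+n}. {q \<in> space noise. phi g n q y = z})"
    by (intro noise.finite_measure_mono) auto
  also have "\<dots> \<le> (\<Sum>z\<in>{K<..y+n}. measure noise {q \<in> space noise. phi g n q y = z})"
    by (intro measure_UNION_le) auto
  also have "\<dots> \<le> (\<Sum>z\<in>{K<..y+n}. stat_dist z) / stat_dist y"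
    unfolding sum_divide_distrib by (intro sum_mono measure_phi_eq_le)
  also have "(\<Sum>z\<in>{K<..y+n}. stat_dist z) = (\<Sum>i<y+n-K. stat_dist (i + Suc K))"
    by (rule sum.reindex_bij_witness[of _ "\<lambda>i. i + Suc K" "\<lambda>z. z - Suc K"]) auto
  also have "\<dots> \<le> stat_tail K"
    unfolding stat_tail_def using stat_dist_pos summable_iff_shift[of stat_dist "Suc K"]
    by (intro sum_le_suminf) (auto simp: less_imp_le sums_summable[OF stat_dist_sums_1])
  finally show ?thesis
    using stat_dist_pos[of y] by (simp add: divide_right_mono)
qed

section \<open>Order, parity and synchronisation\<close>

lemma step_parity: "u < 1 \<Longrightarrow> even (step g x u) \<longleftrightarrow> odd x"
  using step_cases[of u x] by (cases x) auto

lemma step_mono_same_parity: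
  assumes "u < 1" "x \<le> y" "even x = even y"
  shows "step g x u \<le> step g y u"
proof (cases "x = y")
  case False
  then have "Suc x < y"
    using assms(2,3) by (metis Suc_lessI even_Suc le_neq_implies_less)
  then show ?thesis
    using step_le_Suc[of g x u] step_cases[OF assms(1), of y] by linarith
qed simp

lemma phi_parity:
  "(\<And>j. j < n \<Longrightarrow> q (int j) < 1) \<Longrightarrow> even (phi g n q x) \<longleftrightarrow> (even x \<longleftrightarrow> even n)"
  by (induction n) (auto simp: step_parity)

lemma phi_mono_same_parity:
  "(\<And>j. j < n \<Longrightarrow> q (int j) < 1) \<Longrightarrow> x \<le> y \<Longrightarrow> even x = even y \<Longrightarrow>
     phi g n q x \<le> phi g n q y"
proof (induction n)
  case (Suc n)
  then have "even (phi g n q x) = even (phi g n q y)"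
    using phi_parity[of n q x] phi_parity[of n q y] by auto
  then show ?case
    using Suc by (auto intro!: step_mono_same_parity)
qed simp

definition down_threshold :: "nat \<Rightarrow> real" where
  "down_threshold K = Max ((\<lambda>x. (alpha g 1 x + alpha g 2 x + alpha g 3 x) / mu g x) ` {3..K})"

lemma down_threshold_bounds:
  assumes "K \<ge> 3"
  shows "0 \<le> down_threshold K" "down_threshold K < 1"
proof -
  have "(alpha g 1 3 + alpha g 2 3 + alpha g 3 3) / mu g 3 \<le> down_threshold K"
    unfolding down_threshold_def using assms by (intro Max_ge) auto
  then show "0 \<le> down_threshold K"
    using alpha_nonneg mu_pos[of 3] by (smt (verit) divide_nonneg_pos)
  have "(alpha g 1 x + alpha g 2 x + alpha g 3 x) / mu g x < 1" if "x \<ge> 3" for x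
    using alpha4_pos[OF that] mu_pos[of x] by (simp add: mu_eq_sum_alpha)
  then show "down_threshold K < 1"
    unfolding down_threshold_def using assms by (subst Max_less_iff) auto
qed

lemma step_above_down_threshold:
  assumes "3 \<le> x" "x \<le> K" "down_threshold K \<le> u"
  shows "step g x u = x - 1"
proof -
  have "(alpha g 1 x + alpha g 2 x + alpha g 3 x) / mu g x \<le> u"
    using assms order.trans[OF Max_ge assms(3)[unfolded down_threshold_def]] by auto
  then have "alpha g 1 x + alpha g 2 x + alpha g 3 x \<le> u * mu g x"
    using mu_pos[of x] by (simp add: pos_divide_le_eq)
  then show ?thesis
    using alpha_nonneg[of 2 x] alpha_nonneg[of 3 x] by (simp add: step_eq_if kappa_explicit)
qed

lemma phi_descent:
  assumes "K \<ge> 3" "x \<le> K" "\<And>j. j < K \<Longrightarrow> down_threshold K \<le> q (int j)"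
  shows "j \<le> K \<Longrightarrow> phi g j q x \<le> max 3 (x - j)"
proof (induction j)
  case (Suc j)
  then have IH: "phi g j q x \<le> max 3 (x - j)"
    by simp
  show ?case
  proof (cases "phi g j q x \<le> 2")
    case True
    then show ?thesis
      using step_le_Suc[of g "phi g j q x" "q (int j)"] by simp
  next
    case False
    then have "step g (phi g j q x) (q (int j)) = phi g j q x - 1"
      using IH assms Suc.prems by (intro step_above_down_threshold[where K = K]) auto
    then show ?thesis
      using IH False by simp
  qed
qed simp

definition mid_lo :: real where
  "mid_lo = alpha g 1 3 / mu g 3"

definition mid_hi :: real where
  "mid_hi = min (alpha g 1 1 / mu g 1) ((alpha g 1 3 + alpha g 2 3) / mu g 3)"

lemma mid_bounds: "0 \<le> mid_lo" "mid_lo < mid_hi" "mid_hi < 1"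
proof -
  have alpha_1: "alpha g 1 x = g 1" for x
    by (simp add: alpha_def)
  have mu_1: "mu g 1 = g 1 + g 2" and mu_3: "mu g 3 = g 1 + 3 * g 2 + 6 * g 3 + 6 * g 4"
    and alpha_2_3: "alpha g 2 3 = 3 * g 2"
    by (simp_all add: mu_def alpha_def)
  show "0 \<le> mid_lo"
    unfolding mid_lo_def alpha_1 mu_3 using g1_pos g2_pos g3_pos g4_pos by simp
  have "g 1 / (g 1 + 3 * g 2 + 6 * g 3 + 6 * g 4) < g 1 / (g 1 + g 2)"
    using g1_pos g2_pos g3_pos g4_pos by (intro divide_strict_left_mono) auto
  moreover have "g 1 / (g 1 + 3 * g 2 + 6 * g 3 + 6 * g 4) < (g 1 + 3 * g 2) / (g 1 + 3 * g 2 + 6 * g 3 + 6 * g 4)"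
    using g1_pos g2_pos g3_pos g4_pos by (intro divide_strict_right_mono) auto
  ultimately show "mid_lo < mid_hi"
    unfolding mid_lo_def mid_hi_def alpha_1 mu_1 mu_3 alpha_2_3 by simp
  have "g 1 / (g 1 + g 2) < 1"
    using g1_pos g2_pos by simp
  then show "mid_hi < 1"
    unfolding mid_hi_def alpha_1 mu_1 by linarith
qed

lemma step_1_mid: "u < mid_hi \<Longrightarrow> step g 1 u = 2"
  using mu_pos[of 1] by (simp add: mid_hi_def step_eq_if kappa_explicit pos_less_divide_eq mult.commute)

lemma step_3_mid: "mid_lo \<le> u \<Longrightarrow> u < mid_hi \<Longrightarrow> step g 3 u = 2"
  using mu_pos[of 3]
  by (simp add: mid_lo_def mid_hi_def step_eq_if kappa_explicit pos_less_divide_eq pos_divide_le_eq mult.commute)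

lemma two_mid_steps_merge:
  assumes "u \<in> {mid_lo..<mid_hi}" "v \<in> {mid_lo..<mid_hi}" "a \<le> 3" "b \<le> 3" "even a = even b"
  shows "step g (step g a u) v = step g (step g b u) v"
proof -
  have "u < 1" "v < 1"
    using assms(1,2) mid_bounds by auto
  have odd_to_2: "step g a u = 2" if "a \<in> {1, 3}" for a
    using that assms(1) step_1_mid step_3_mid by auto
  have even_to_2: "step g (step g a u) v = 2" if "a \<in> {0, 2}" for a
  proof -
    have "step g a u \<in> {1, 3}"
      using that step_0[OF \<open>u < 1\<close>] step_cases[OF \<open>u < 1\<close>, of 2] by auto
    then show ?thesis
      using assms(2) step_1_mid step_3_mid by auto
  qed
  have "a \<in> {0, 1, 2, 3}" "b \<in> {0, 1, 2, 3}"
    using assms(3,4) by auto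
  then show ?thesis
    using odd_to_2 even_to_2 assms(5) by auto
qed

text \<open>
  Noise values above \<open>down_threshold K\<close> move every state in \<open>{3..K}\<close> down, and a
  value in \<open>[mid_lo, mid_hi)\<close> sends both 1 and 3 to 2.  So after \<open>K\<close> such values of the
  first kind and two of the second, all states up to \<open>K\<close> of equal parity have merged.
\<close>

definition sync_window :: "nat \<Rightarrow> (int \<Rightarrow> real) \<Rightarrow> bool" where
  "sync_window K q \<longleftrightarrow>
     (\<forall>i\<in>{0..int K + 1}. q i \<in> (if i < int K then {down_threshold K..<1} else {mid_lo..<mid_hi}))"

lemma phi_sync_window:
  assumes "K \<ge> 3" "sync_window K q" "x \<le> K" "y \<le> K" "even x = even y"
  shows "phi g (K + 2) q x = phi g (K + 2) q y"
proof -
  have window: "q i \<in> (if i < int K then {down_threshold K..<1} else {mid_lo..<mid_hi})"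
    if "0 \<le> i" "i \<le> int K + 1" for i
    using assms(2) that unfolding sync_window_def by simp
  have down: "down_threshold K \<le> q (int j)" "q (int j) < 1" if "j < K" for j
    using window[of "int j"] that by auto
  have mid: "q (int K) \<in> {mid_lo..<mid_hi}" "q (int K + 1) \<in> {mid_lo..<mid_hi}"
    using window[of "int K"] window[of "int K + 1"] by auto
  have le_3: "phi g K q x \<le> 3" "phi g K q y \<le> 3"
    using phi_descent[OF assms(1) assms(3), of q K] phi_descent[OF assms(1) assms(4), of q K] down assms(3,4)
    by simp_all
  have parity: "even (phi g K q x) = even (phi g K q y)"
    using phi_parity[of K q] down assms(5) by auto
  have two_steps: "phi g (K + 2) q z = step g (step g (phi g K q z) (q (int K))) (q (int K + 1))" for z
    by (simp add: numeral_eq_Suc add.commute)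
  show ?thesis
    unfolding two_steps by (rule two_mid_steps_merge[OF mid le_3 parity])
qed

definition sync_event :: "nat \<Rightarrow> nat \<Rightarrow> (int \<Rightarrow> real) set" where
  "sync_event K k = {q \<in> space noise. sync_window K ((shift ^^ k) q)}"

lemma sync_event_sets [measurable]: "sync_event K k \<in> sets noise"
  unfolding sync_event_def sync_window_def funpow_shift_apply if_split_mem2 atLeastLessThan_iff
  by measurable

lemma depends_on_sync_event: "depends_on {int k..int k + int K + 1} (sync_event K k)"
  unfolding depends_on_def sync_event_def sync_window_def funpow_shift_apply by auto

lemma measure_sync_event: "measure noise (sync_event K k) = measure noise (sync_event K 0)"
proof -
  have "sync_event K k = (shift ^^ k) -` sync_event K 0 \<inter> space noise"
    unfolding sync_event_def using funpow_shift_in_space by auto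
  then show ?thesis
    using measure_funpow_shift_vimage[OF sync_event_sets] by simp
qed

lemma measure_sync_event_pos:
  assumes "K \<ge> 3"
  shows "measure noise (sync_event K 0) > 0"
proof -
  define X where "X i = (if i < int K then {down_threshold K..<1} else {mid_lo..<mid_hi})" for i
  define len where "len i = (if i < int K then 1 - down_threshold K else mid_hi - mid_lo)" for i
  have len_pos: "len i > 0" for i
    unfolding len_def using down_threshold_bounds[OF assms] mid_bounds by auto
  have X_sets: "X i \<in> sets unif01" for i
    unfolding X_def sets_unif01_iff using down_threshold_bounds[OF assms] mid_bounds by auto
  have X_measure: "emeasure unif01 (X i) = len i" for i
    unfolding X_def len_def unif01_def using down_threshold_bounds[OF assms] mid_bounds
    by (subst emeasure_restrict_space) (auto simp: emeasure_lborel_Ico)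
  have "sync_event K 0 = {q \<in> space (PiM UNIV (\<lambda>_. unif01)). \<forall>i\<in>{0..int K + 1}. q i \<in> X i}"
    unfolding sync_event_def sync_window_def X_def noise_eq_PiM by simp
  then have "emeasure noise (sync_event K 0) = (\<Prod>i\<in>{0..int K + 1}. ennreal (len i))"
    unfolding noise_eq_PiM using X_sets by (simp add: noise_factors.emeasure_PiM_Collect X_measure)
  then have "measure noise (sync_event K 0) = (\<Prod>i\<in>{0..int K + 1}. len i)"
    using len_pos by (simp add: measure_def prod_ennreal prod_nonneg less_imp_le)
  then show ?thesis
    using len_pos by (simp add: prod_pos)
qed

section \<open>Coalescence\<close>

definition not_coalesced :: "nat \<Rightarrow> nat \<Rightarrow> nat \<Rightarrow> (int \<Rightarrow> real) set" where
  "not_coalesced x y n = {q \<in> space noise. phi g n q x \<noteq> phi g n q y}"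

lemma not_coalesced_sets [measurable]: "not_coalesced x y n \<in> sets noise"
  unfolding not_coalesced_def by measurable

lemma decseq_measure_not_coalesced: "decseq (\<lambda>n. measure noise (not_coalesced x y n))"
proof (rule decseq_SucI)
  fix n
  have "not_coalesced x y (n + 1) \<subseteq> not_coalesced x y n"
    unfolding not_coalesced_def using phi_add[of g n 1] by auto
  then show "measure noise (not_coalesced x y (Suc n)) \<le> measure noise (not_coalesced x y n)"
    by (intro noise.finite_measure_mono) auto
qed

lemma coalesced_after_sync_window:
  assumes "regular_noise q" "K \<ge> 3" "x \<le> y" "even x = even y"
    and "phi g k q y \<le> K" "sync_window K ((shift ^^ k) q)"
  shows "phi g (k + (K + 2)) q x = phi g (k + (K + 2)) q y"
proof -
  have lt_1: "\<And>j. j < k \<Longrightarrow> q (int j) < 1"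
    using assms(1) unfolding regular_noise_def by blast
  have "phi g k q x \<le> phi g k q y"
    using phi_mono_same_parity[of k q, OF lt_1 assms(3,4)] .
  moreover have "even (phi g k q x) = even (phi g k q y)"
    using phi_parity[of k q, OF lt_1] assms(4) by auto
  ultimately have "phi g (K + 2) ((shift ^^ k) q) (phi g k q x) = phi g (K + 2) ((shift ^^ k) q) (phi g k q y)"
    using assms(5) by (intro phi_sync_window[OF assms(2,6)]) auto
  then show ?thesis
    unfolding phi_add .
qed

lemma measure_not_coalesced_step:
  assumes "K \<ge> 3" "x \<le> y" "even x = even y"
    and high: "measure noise {q \<in> space noise. phi g k q y > K} \<le> e"
  shows "measure noise (not_coalesced x y (k + (K + 2)))
           \<le> measure noise (not_coalesced x y k)
              - measure noise (sync_event K 0) * (measure noise (not_coalesced x y k) - e)"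
proof -
  define L where "L = {q \<in> space noise. phi g k q x \<noteq> phi g k q y \<and> phi g k q y \<le> K}"
  have L_sets [measurable]: "L \<in> sets noise"
    unfolding L_def by measurable
  have "AE q in noise. q \<in> not_coalesced x y (k + (K + 2)) \<longrightarrow>
      q \<in> not_coalesced x y k - (L \<inter> sync_event K k)"
    using AE_regular_noise
  proof eventually_elim
    case (elim q)
    then show ?case
      using coalesced_after_sync_window[OF elim assms(1-3), of k] phi_add[of g k "K + 2" q]
      by (auto simp: not_coalesced_def L_def sync_event_def)
  qed
  then have "measure noise (not_coalesced x y (k + (K + 2)))
      \<le> measure noise (not_coalesced x y k - (L \<inter> sync_event K k))"
    by (intro noise.finite_measure_mono_AE) auto
  also have "\<dots> = measure noise (not_coalesced x y k) - measure noise (L \<inter> sync_event K k)"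
    by (intro noise.finite_measure_Diff) (auto simp: L_def not_coalesced_def)
  also have "measure noise (L \<inter> sync_event K k) = measure noise L * measure noise (sync_event K 0)"
    using depends_on_phi[where n = k and P = "\<lambda>a b. a \<noteq> b \<and> b \<le> K" and x = x and y = y]
      depends_on_sync_event[of k K] measure_sync_event[of K k]
    by (subst measure_Int_depends_on_disjoint) (auto simp: L_def)
  finally have "measure noise (not_coalesced x y (k + (K + 2)))
      \<le> measure noise (not_coalesced x y k) - measure noise L * measure noise (sync_event K 0)" .
  moreover have "measure noise (not_coalesced x y k) - e \<le> measure noise L"
  proof -
    have "not_coalesced x y k \<subseteq> L \<union> {q \<in> space noise. phi g k q y > K}"
      unfolding not_coalesced_def L_def by auto
    then have "measure noise (not_coalesced x y k)
        \<le> measure noise L + measure noise {q \<in> space noise. phi g k q y > K}"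
      by (intro order.trans[OF noise.finite_measure_mono measure_Un_le]) auto
    then show ?thesis
      using high by linarith
  qed
  then have "(measure noise (not_coalesced x y k) - e) * measure noise (sync_event K 0)
      \<le> measure noise L * measure noise (sync_event K 0)"
    by (intro mult_right_mono) auto
  ultimately show ?thesis
    by (simp add: algebra_simps)
qed

lemma not_coalesced_decrement:
  assumes "x \<le> y" "even x = even y" "r > 0"
  shows "\<exists>L \<delta>. \<delta> > 0 \<and> (\<forall>k. measure noise (not_coalesced x y k) \<ge> r \<longrightarrow>
           measure noise (not_coalesced x y (k + L)) \<le> measure noise (not_coalesced x y k) - \<delta>)"
proof -
  obtain K0 where tail: "\<And>K. K \<ge> K0 \<Longrightarrow> stat_tail K < r / 2 * stat_dist y"
    using order_tendstoD(2)[OF stat_tail_tendsto_0, of "r / 2 * stat_dist y"] stat_dist_pos[of y] assms(3)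
    by (auto simp: eventually_sequentially)
  define K where "K = max 3 K0"
  have "stat_tail K / stat_dist y \<le> r / 2"
    using tail[of K] stat_dist_pos[of y] by (simp add: K_def pos_divide_le_eq)
  then have high: "measure noise {q \<in> space noise. phi g k q y > K} \<le> r / 2" for k
    using measure_phi_gt_le[where n = k and y = y and K = K] by linarith
  define p where "p = measure noise (sync_event K 0)"
  have "p > 0"
    unfolding p_def K_def by (simp add: measure_sync_event_pos)
  moreover have "measure noise (not_coalesced x y (k + (K + 2))) \<le> measure noise (not_coalesced x y k) - p * (r / 2)"
    if "measure noise (not_coalesced x y k) \<ge> r" for k
  proof -
    have "p * (r / 2) \<le> p * (measure noise (not_coalesced x y k) - r / 2)"
      using that \<open>p > 0\<close> by (intro mult_left_mono) auto
    then show ?thesis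
      using measure_not_coalesced_step[where K = K and k = k, OF _ assms(1,2) high]
      unfolding p_def K_def by simp
  qed
  ultimately show ?thesis
    using assms(3) by (intro exI[of _ "K + 2"] exI[of _ "p * (r / 2)"]) auto
qed

lemma not_coalesced_tendsto_0:
  assumes "even x = even y"
  shows "(\<lambda>n. measure noise (not_coalesced x y n)) \<longlonglongrightarrow> 0"
proof -
  have ordered: "(\<lambda>n. measure noise (not_coalesced x y n)) \<longlonglongrightarrow> 0"
    if "x \<le> y" "even x = even y" for x y
    using decseq_measure_not_coalesced measure_nonneg not_coalesced_decrement[OF that]
    by (rule decseq_tendsto_0_by_decrements)
  have swap: "not_coalesced y x n = not_coalesced x y n" for n
    unfolding not_coalesced_def by auto
  show ?thesis
  proof (cases "x \<le> y")
    case True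
    then show ?thesis
      using ordered assms by blast
  next
    case False
    then show ?thesis
      using ordered[of y x] assms unfolding swap by simp
  qed
qed

section \<open>The pullback attractor\<close>

text \<open>The state at time 0 of the trajectory started in 0 at time \<open>-n\<close>.\<close>

definition pullback :: "nat \<Rightarrow> (int \<Rightarrow> real) \<Rightarrow> nat" where
  "pullback n q = phi g n ((ishift ^^ n) q) 0"

lemma pullback_measurable [measurable]: "pullback n \<in> noise \<rightarrow>\<^sub>M count_space UNIV"
  unfolding pullback_def by (rule measurable_compose[OF funpow_ishift_measurable phi_measurable])

lemma pullback_Suc_shift: "pullback (Suc n) (shift q) = step g (pullback n q) (q 0)"
proof -
  have "(ishift ^^ Suc n) (shift q) = (ishift ^^ n) q"
    by (simp add: funpow_ishift_apply shift_def del: funpow.simps)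
  then show ?thesis
    unfolding pullback_def by (simp add: funpow_ishift_apply del: funpow.simps)
qed

lemma phi_funpow_ishift_add:
  "phi g (m + n) ((ishift ^^ (m + n)) q) x = phi g n ((ishift ^^ n) q) (phi g m ((ishift ^^ (m + n)) q) x)"
proof -
  have "(shift ^^ m) ((ishift ^^ (m + n)) q) = (ishift ^^ n) q"
    by (simp add: funpow_ishift_apply funpow_shift_apply)
  then show ?thesis
    by (simp add: phi_add)
qed

lemma pullback_le_pullback_add_2:
  assumes "regular_noise q"
  shows "pullback n q \<le> pullback (n + 2) q"
proof -
  define r where "r = (ishift ^^ (2 + n)) q"
  have "\<And>i. r i < 1" "\<And>i. (ishift ^^ n) q i < 1"
    unfolding r_def by (rule regular_noise_lt_1[OF regular_noise_funpow_ishift[OF assms]])+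
  then have "phi g n ((ishift ^^ n) q) 0 \<le> phi g n ((ishift ^^ n) q) (phi g 2 r 0)"
    using phi_parity[of 2 r 0] by (intro phi_mono_same_parity) auto
  then show ?thesis
    unfolding pullback_def using phi_funpow_ishift_add[of 2 n q 0] by (simp add: r_def add.commute)
qed

lemma pullback_Suc_eq_phi_1:
  assumes "regular_noise q"
  shows "pullback (Suc n) q = phi g n ((ishift ^^ n) q) 1"
proof -
  define r where "r = (ishift ^^ (1 + n)) q"
  have "r 0 < 1"
    unfolding r_def using regular_noise_lt_1[OF regular_noise_funpow_ishift[OF assms]] .
  then have "phi g 1 r 0 = 1"
    using step_0 by simp
  then show ?thesis
    unfolding pullback_def using phi_funpow_ishift_add[of 1 n q 0] by (simp add: r_def)
qed

lemma incseq_pullback_even: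
  assumes "regular_noise q"
  shows "incseq (\<lambda>m. pullback (2 * m) q)"
proof (rule incseq_SucI)
  show "pullback (2 * m) q \<le> pullback (2 * Suc m) q" for m
    using pullback_le_pullback_add_2[OF assms, of "2 * m"] by simp
qed

lemma incseq_pullback_odd:
  assumes "regular_noise q"
  shows "incseq (\<lambda>m. pullback (2 * m + 1) q)"
proof (rule incseq_SucI)
  show "pullback (2 * m + 1) q \<le> pullback (2 * Suc m + 1) q" for m
    using pullback_le_pullback_add_2[OF assms, of "2 * m + 1"] by simp
qed

definition typical :: "(int \<Rightarrow> real) \<Rightarrow> bool" where
  "typical q \<longleftrightarrow> regular_noise q \<and> (\<exists>K. \<forall>n. pullback n q \<le> K)"

definition lim_even :: "(int \<Rightarrow> real) \<Rightarrow> nat" where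
  "lim_even q = (LEAST k. \<forall>m. pullback (2 * m) q \<le> k)"

definition lim_odd :: "(int \<Rightarrow> real) \<Rightarrow> nat" where
  "lim_odd q = (LEAST k. \<forall>m. pullback (2 * m + 1) q \<le> k)"

text \<open>On the null set of atypical noise, \<open>{0}\<close> is an arbitrary nonempty finite choice.\<close>

definition attractor :: "(int \<Rightarrow> real) \<Rightarrow> nat set" where
  "attractor q = (if typical q then {lim_even q, lim_odd q} else {0})"

lemma typical_measurable [measurable]: "Measurable.pred noise typical"
  unfolding typical_def by measurable

lemma lim_even_measurable [measurable]: "lim_even \<in> noise \<rightarrow>\<^sub>M count_space UNIV"
  unfolding lim_even_def by measurable

lemma lim_odd_measurable [measurable]: "lim_odd \<in> noise \<rightarrow>\<^sub>M count_space UNIV"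
  unfolding lim_odd_def by measurable

lemma mem_attractor_measurable [measurable]: "Measurable.pred noise (\<lambda>q. y \<in> attractor q)"
proof -
  have "(\<lambda>q. y \<in> attractor q) = (\<lambda>q. if typical q then y = lim_even q \<or> y = lim_odd q else y = 0)"
    unfolding attractor_def by auto
  then show ?thesis
    by simp
qed

lemma eventually_pullback_even:
  "typical q \<Longrightarrow> eventually (\<lambda>m. pullback (2 * m) q = lim_even q) sequentially"
  unfolding lim_even_def typical_def by (auto intro!: incseq_bounded_eventually_Least incseq_pullback_even)

lemma eventually_pullback_odd:
  "typical q \<Longrightarrow> eventually (\<lambda>m. pullback (2 * m + 1) q = lim_odd q) sequentially"
  unfolding lim_odd_def typical_def
  by (auto intro!: incseq_bounded_eventually_Least[OF incseq_pullback_odd] simp del: One_nat_def)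

lemma typical_shift:
  assumes "typical q"
  shows "typical (shift q)"
proof -
  obtain K where K: "\<And>n. pullback n q \<le> K"
    using assms unfolding typical_def by blast
  have "pullback n (shift q) \<le> Suc K" for n
  proof (cases n)
    case (Suc m)
    then show ?thesis
      using K[of m] step_le_Suc[of g "pullback m q" "q 0"] by (simp add: pullback_Suc_shift)
  qed (simp add: pullback_def)
  moreover have "regular_noise (shift q)"
    using assms regular_noise_funpow_shift[of q 1] by (simp add: typical_def)
  ultimately show ?thesis
    unfolding typical_def by blast
qed

lemma lim_shift:
  assumes "typical q"
  shows "lim_even (shift q) = step g (lim_odd q) (q 0)" "lim_odd (shift q) = step g (lim_even q) (q 0)"
proof -
  have "eventually (\<lambda>m. pullback (2 * Suc m) (shift q) = step g (lim_odd q) (q 0)) sequentially"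
    using eventually_pullback_odd[OF assms] by eventually_elim (simp add: pullback_Suc_shift)
  then have "eventually (\<lambda>m. pullback (2 * m) (shift q) = step g (lim_odd q) (q 0)) sequentially"
    using eventually_sequentially_Suc[of "\<lambda>m. pullback (2 * m) (shift q) = step g (lim_odd q) (q 0)"]
    by simp
  then show "lim_even (shift q) = step g (lim_odd q) (q 0)"
    using eventually_pullback_even[OF typical_shift[OF assms]] by (rule eventually_const_unique[rotated])
  have "eventually (\<lambda>m. pullback (2 * m + 1) (shift q) = step g (lim_even q) (q 0)) sequentially"
    using eventually_pullback_even[OF assms] by eventually_elim (simp add: pullback_Suc_shift)
  then show "lim_odd (shift q) = step g (lim_even q) (q 0)"
    using eventually_pullback_odd[OF typical_shift[OF assms]] by (rule eventually_const_unique[rotated])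
qed

lemma typical_funpow_shift: "typical q \<Longrightarrow> typical ((shift ^^ n) q)"
  by (induction n) (auto intro: typical_shift)

lemma fstep_image_attractor:
  assumes "typical q"
  shows "fstep g q ` attractor q = attractor (shift q)"
  using assms typical_shift[OF assms] lim_shift[OF assms] unfolding attractor_def by (auto simp: fstep_eq_step)

lemma phi_image_attractor:
  assumes "typical q"
  shows "phi g n q ` attractor q = attractor ((shift ^^ n) q)"
proof (induction n)
  case (Suc n)
  have "phi g (Suc n) q ` attractor q = fstep g ((shift ^^ n) q) ` phi g n q ` attractor q"
    by (simp add: phi.simps(2) image_comp)
  also have "\<dots> = attractor (shift ((shift ^^ n) q))"
    unfolding Suc.IH using typical_funpow_shift[OF assms] by (rule fstep_image_attractor)
  finally show ?case
    by simp
qed simp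

lemma measure_pullback_gt_le: "measure noise {q \<in> space noise. pullback n q > K} \<le> stat_tail K / stat_dist 0"
proof -
  have "measure noise {q \<in> space noise. pullback n q > K} = measure noise {q \<in> space noise. phi g n q 0 > K}"
    unfolding pullback_def by (rule measure_funpow_ishift_Collect) measurable
  then show ?thesis
    using measure_phi_gt_le[where n = n and y = 0 and K = K] by simp
qed

lemma measure_atypical_le:
  "measure noise {q \<in> space noise. regular_noise q \<and> \<not> typical q} \<le> 2 * (stat_tail K / stat_dist 0)"
proof -
  define U where
    "U M = {q \<in> space noise. regular_noise q \<and> (pullback (2 * M) q > K \<or> pullback (2 * M + 1) q > K)}"
    for M
  have U_sets: "range U \<subseteq> sets noise"
    unfolding U_def by auto
  have "incseq U"
  proof (rule incseq_SucI)
    show "U M \<subseteq> U (Suc M)" for M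
      using pullback_le_pullback_add_2[of _ "2 * M"] pullback_le_pullback_add_2[of _ "2 * M + 1"]
      unfolding U_def by (auto intro: less_le_trans)
  qed
  moreover have "measure noise (U M) \<le> 2 * (stat_tail K / stat_dist 0)" for M
  proof -
    have "U M \<subseteq> {q \<in> space noise. pullback (2 * M) q > K} \<union> {q \<in> space noise. pullback (2 * M + 1) q > K}"
      unfolding U_def by auto
    then have "measure noise (U M) \<le> measure noise {q \<in> space noise. pullback (2 * M) q > K}
        + measure noise {q \<in> space noise. pullback (2 * M + 1) q > K}"
      by (intro order.trans[OF noise.finite_measure_mono measure_Un_le]) auto
    then show ?thesis
      using measure_pullback_gt_le[where n = "2 * M" and K = K] measure_pullback_gt_le[where n = "2 * M + 1" and K = K]
      by linarith
  qed
  ultimately have "measure noise (\<Union>M. U M) \<le> 2 * (stat_tail K / stat_dist 0)"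
    by (rule noise.measure_UN_le_of_incseq[OF U_sets])
  moreover have "{q \<in> space noise. regular_noise q \<and> \<not> typical q} \<subseteq> (\<Union>M. U M)"
  proof
    fix q assume "q \<in> {q \<in> space noise. regular_noise q \<and> \<not> typical q}"
    then obtain n where "pullback n q > K" "regular_noise q" "q \<in> space noise"
      unfolding typical_def by (auto simp: not_le)
    moreover have "n = 2 * (n div 2) \<or> n = 2 * (n div 2) + 1"
      by presburger
    ultimately have "q \<in> U (n div 2)"
      unfolding U_def by auto
    then show "q \<in> (\<Union>M. U M)"
      by blast
  qed
  then have "measure noise {q \<in> space noise. regular_noise q \<and> \<not> typical q} \<le> measure noise (\<Union>M. U M)"
    using sets.countable_UN[OF U_sets] by (intro noise.finite_measure_mono)
  ultimately show ?thesis
    by linarith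
qed

lemma AE_typical: "AE q in noise. typical q"
proof -
  define N where "N = {q \<in> space noise. regular_noise q \<and> \<not> typical q}"
  have "(\<lambda>K. 2 * (stat_tail K / stat_dist 0)) \<longlonglongrightarrow> 0"
    using tendsto_mult_right_zero[OF tendsto_divide_zero[OF stat_tail_tendsto_0]] by simp
  then have "measure noise N \<le> 0"
    unfolding N_def using measure_atypical_le by (intro LIMSEQ_le_const[of _ 0]) auto
  moreover have "N \<in> sets noise"
    unfolding N_def by measurable
  ultimately have "AE q in noise. q \<notin> N"
    by (intro AE_not_in) (simp add: noise.emeasure_eq_measure null_sets_def measure_le_0_iff)
  then show ?thesis
    using AE_regular_noise AE_space by eventually_elim (auto simp: N_def)
qed

lemma eventually_pullback_in_attractor:
  assumes "typical q"
  shows "eventually (\<lambda>m. pullback m q \<in> attractor q) sequentially"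
proof -
  obtain Ma Mb where even: "\<And>m. m \<ge> Ma \<Longrightarrow> pullback (2 * m) q = lim_even q"
    and odd: "\<And>m. m \<ge> Mb \<Longrightarrow> pullback (2 * m + 1) q = lim_odd q"
    using eventually_pullback_even[OF assms] eventually_pullback_odd[OF assms]
    unfolding eventually_sequentially by blast
  have "pullback m q \<in> attractor q" if "m \<ge> 2 * (Ma + Mb)" for m
  proof (cases "even m")
    case True
    then show ?thesis
      using that even[of "m div 2"] assms by (auto simp: attractor_def)
  next
    case False
    then have "m = 2 * (m div 2) + 1"
      by presburger
    then show ?thesis
      using that odd[of "m div 2"] assms by (auto simp: attractor_def)
  qed
  then show ?thesis
    unfolding eventually_sequentially by blast
qed

lemma pullback_notin_attractor_measurable [measurable]: "Measurable.pred noise (\<lambda>q. pullback m q \<notin> attractor q)"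
  by (rule measurable_compose_countable[where f = "\<lambda>y q. y \<notin> attractor q", OF _ pullback_measurable]) measurable

lemma pullback_leaves_attractor_tendsto_0:
  "(\<lambda>n. measure noise {q \<in> space noise. typical q \<and> (\<exists>m\<ge>n. pullback m q \<notin> attractor q)}) \<longlonglongrightarrow> 0"
proof -
  define T where "T n = {q \<in> space noise. typical q \<and> (\<exists>m\<ge>n. pullback m q \<notin> attractor q)}" for n
  have "T n \<in> sets noise" for n
    unfolding T_def by measurable
  then have "range T \<subseteq> sets noise"
    by blast
  moreover have "decseq T"
    by (rule decseq_SucI) (auto simp: T_def dest: Suc_leD)
  moreover have "(\<Inter>n. T n) = {}"
  proof (intro equals0I)
    fix q assume q: "q \<in> (\<Inter>n. T n)"
    then have "typical q"
      unfolding T_def by auto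
    then obtain N where "\<forall>m\<ge>N. pullback m q \<in> attractor q"
      using eventually_pullback_in_attractor unfolding eventually_sequentially by blast
    then show False
      using q unfolding T_def by auto
  qed
  ultimately have "(\<lambda>n. measure noise (T n)) \<longlonglongrightarrow> 0"
    using noise.finite_Lim_measure_decseq[of T] by simp
  then show ?thesis
    unfolding T_def .
qed

lemma phi_notin_attractor_measurable [measurable]:
  "Measurable.pred noise (\<lambda>q. phi g n q x \<notin> attractor ((shift ^^ n) q))"
proof (rule measurable_compose_countable[where f = "\<lambda>y q. y \<notin> attractor ((shift ^^ n) q)", OF _ phi_measurable])
  show "Measurable.pred noise (\<lambda>q. y \<notin> attractor ((shift ^^ n) q))" for y
    using measurable_compose[OF funpow_shift_measurable mem_attractor_measurable[of y]] by (simp add: pred_def)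
qed

lemma AE_notin_attractor_imp:
  "AE q in noise. phi g n ((ishift ^^ n) q) x \<notin> attractor q \<longrightarrow>
     phi g n ((ishift ^^ n) q) x \<noteq> phi g n ((ishift ^^ n) q) (x mod 2) \<or>
     (typical q \<and> (\<exists>m\<ge>n. pullback m q \<notin> attractor q))"
  using AE_typical
proof eventually_elim
  case (elim q)
  have "x mod 2 = 0 \<or> x mod 2 = 1"
    by auto
  then have "phi g n ((ishift ^^ n) q) (x mod 2) \<in> {pullback n q, pullback (Suc n) q}"
    using pullback_Suc_eq_phi_1[of q n] elim by (auto simp: typical_def pullback_def[of n q])
  then obtain m where "n \<le> m" "phi g n ((ishift ^^ n) q) (x mod 2) = pullback m q"
    using le_SucI by blast
  then show ?case
    using elim by auto
qed

lemma measure_phi_notin_attractor_le: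
  "measure noise {q \<in> space noise. phi g n q x \<notin> attractor ((shift ^^ n) q)}
     \<le> measure noise (not_coalesced x (x mod 2) n)
        + measure noise {q \<in> space noise. typical q \<and> (\<exists>m\<ge>n. pullback m q \<notin> attractor q)}"
proof -
  let ?r = "(ishift ^^ n)"
  define T where "T = {q \<in> space noise. typical q \<and> (\<exists>m\<ge>n. pullback m q \<notin> attractor q)}"
  have "measure noise {q \<in> space noise. phi g n q x \<notin> attractor ((shift ^^ n) q)}
      = measure noise {q \<in> space noise. phi g n (?r q) x \<notin> attractor q}"
    using measure_funpow_ishift_Collect[OF phi_notin_attractor_measurable, of n n x]
    by (simp add: funpow_shift_ishift)
  also have "\<dots> \<le> measure noise ({q \<in> space noise. phi g n (?r q) x \<noteq> phi g n (?r q) (x mod 2)} \<union> T)"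
    using AE_notin_attractor_imp[of n x] by (intro noise.finite_measure_mono_AE) (auto simp: T_def)
  also have "\<dots> \<le> measure noise {q \<in> space noise. phi g n (?r q) x \<noteq> phi g n (?r q) (x mod 2)}
      + measure noise T"
    by (intro measure_Un_le) (auto simp: T_def)
  also have "measure noise {q \<in> space noise. phi g n (?r q) x \<noteq> phi g n (?r q) (x mod 2)}
      = measure noise (not_coalesced x (x mod 2) n)"
    unfolding not_coalesced_def by (rule measure_funpow_ishift_Collect) measurable
  finally show ?thesis
    unfolding T_def .
qed

lemma phi_notin_attractor_tendsto_0:
  "(\<lambda>n. measure noise {q \<in> space noise. phi g n q x \<notin> attractor ((shift ^^ n) q)}) \<longlonglongrightarrow> 0"
proof -
  have "(\<lambda>n. measure noise (not_coalesced x (x mod 2) n)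
      + measure noise {q \<in> space noise. typical q \<and> (\<exists>m\<ge>n. pullback m q \<notin> attractor q)}) \<longlonglongrightarrow> 0"
    using tendsto_add[OF not_coalesced_tendsto_0 pullback_leaves_attractor_tendsto_0] by simp
  then show ?thesis
    by (rule tendsto_sandwich[rotated 2, OF tendsto_const])
       (use measure_phi_notin_attractor_le in \<open>auto intro!: always_eventually\<close>)
qed

lemma pt_dist_attractor_measurable [measurable]: "(\<lambda>q. pt_dist x (attractor q)) \<in> borel_measurable noise"
proof -
  have "pt_dist x (attractor q) =
      (if typical q then min \<bar>real x - real (lim_even q)\<bar> \<bar>real x - real (lim_odd q)\<bar> else real x)" for q
    unfolding attractor_def by (simp add: pt_dist_eq_Min)
  moreover have [measurable]: "(\<lambda>q. real (lim_even q)) \<in> borel_measurable noise"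
    "(\<lambda>q. real (lim_odd q)) \<in> borel_measurable noise"
    by (rule measurable_compose[OF lim_even_measurable], simp, rule measurable_compose[OF lim_odd_measurable], simp)
  ultimately show ?thesis
    by simp
qed

lemma attractor_attracts:
  assumes "finite B" "e > 0"
  shows "{q \<in> space noise. set_dist (phi g n q ` B) (attractor ((shift ^^ n) q)) > e} \<in> sets noise"
    and "(\<lambda>n. measure noise {q \<in> space noise. set_dist (phi g n q ` B) (attractor ((shift ^^ n) q)) > e})
           \<longlonglongrightarrow> 0"
proof -
  have far_eq: "{q \<in> space noise. set_dist (phi g n q ` B) (attractor ((shift ^^ n) q)) > e}
      = (\<Union>x\<in>B. {q \<in> space noise. pt_dist (phi g n q x) (attractor ((shift ^^ n) q)) > e})" for n
    using set_dist_gt_iff[OF finite_imageI[OF assms(1)] assms(2)] by blast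
  have "(\<lambda>q. pt_dist (phi g n q x) (attractor ((shift ^^ n) q))) \<in> borel_measurable noise" for n x
    using measurable_compose[OF funpow_shift_measurable pt_dist_attractor_measurable]
    by (rule measurable_compose_countable[OF _ phi_measurable])
  then have far_sets: "{q \<in> space noise. pt_dist (phi g n q x) (attractor ((shift ^^ n) q)) > e} \<in> sets noise"
    for n x by measurable
  then show "{q \<in> space noise. set_dist (phi g n q ` B) (attractor ((shift ^^ n) q)) > e} \<in> sets noise"
    unfolding far_eq using assms(1) by blast
  have notin_sets: "{q \<in> space noise. phi g n q x \<notin> attractor ((shift ^^ n) q)} \<in> sets noise" for n x
    by measurable
  have bound: "measure noise {q \<in> space noise. set_dist (phi g n q ` B) (attractor ((shift ^^ n) q)) > e}
      \<le> (\<Sum>x\<in>B. measure noise {q \<in> space noise. phi g n q x \<notin> attractor ((shift ^^ n) q)})" for n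
  proof -
    have "{q \<in> space noise. set_dist (phi g n q ` B) (attractor ((shift ^^ n) q)) > e}
        \<subseteq> (\<Union>x\<in>B. {q \<in> space noise. phi g n q x \<notin> attractor ((shift ^^ n) q)})"
      unfolding far_eq using pt_dist_eq_0 assms(2) by (smt (verit) UN_iff mem_Collect_eq subsetI)
    then have "measure noise {q \<in> space noise. set_dist (phi g n q ` B) (attractor ((shift ^^ n) q)) > e}
        \<le> measure noise (\<Union>x\<in>B. {q \<in> space noise. phi g n q x \<notin> attractor ((shift ^^ n) q)})"
      using assms(1) notin_sets by (intro noise.finite_measure_mono sets.finite_UN) auto
    also have "\<dots> \<le> (\<Sum>x\<in>B. measure noise {q \<in> space noise. phi g n q x \<notin> attractor ((shift ^^ n) q)})"
      using assms(1) notin_sets by (intro measure_UNION_le) auto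
    finally show ?thesis .
  qed
  have lim: "(\<lambda>n. \<Sum>x\<in>B. measure noise {q \<in> space noise. phi g n q x \<notin> attractor ((shift ^^ n) q)}) \<longlonglongrightarrow> 0"
    by (intro tendsto_null_sum phi_notin_attractor_tendsto_0)
  show "(\<lambda>n. measure noise {q \<in> space noise. set_dist (phi g n q ` B) (attractor ((shift ^^ n) q)) > e})
      \<longlonglongrightarrow> 0"
    by (intro tendsto_sandwich[rotated 2, OF tendsto_const lim] always_eventually allI measure_nonneg bound)
qed

lemma weak_attractor_attractor: "weak_attractor g attractor"
  unfolding weak_attractor_def
proof (intro conjI allI ballI impI)
  show "(\<lambda>q. pt_dist x (attractor q)) \<in> borel_measurable noise" for x
    by (rule pt_dist_attractor_measurable)
  show "attractor q \<noteq> {}" "finite (attractor q)" for q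
    by (simp_all add: attractor_def)
  show "AE q in noise. \<forall>n. phi g n q ` attractor q = attractor ((shift ^^ n) q)"
    using AE_typical by eventually_elim (simp add: phi_image_attractor)
  fix B :: "nat set" and e :: real
  assume "finite B" "e > 0"
  then show "{q \<in> space noise. set_dist (phi g n q ` B) (attractor ((shift ^^ n) q)) > e} \<in> sets noise" for n
    by (rule attractor_attracts)
  from \<open>finite B\<close> \<open>e > 0\<close>
  show "(\<lambda>n. measure noise {q \<in> space noise. set_dist (phi g n q ` B) (attractor ((shift ^^ n) q)) > e})
      \<longlonglongrightarrow> 0"
    by (rule attractor_attracts)
qed

end

theorem proposition4p12:
  fixes g :: "nat \<Rightarrow> real"
  assumes "g 1 > 0" and "g 2 > 0" and "g 3 > 0" and "g 4 > 0"
  shows "(\<exists>!p :: nat pmf. stationary g p)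
       \<and> (\<exists>A. weak_attractor g A \<and>
              (\<forall>A'. weak_attractor g A' \<longrightarrow> (AE q in noise. A' q = A q)))"
proof -
  interpret schloegl g
    using assms by unfold_locales
  have "AE q in noise. A' q = attractor q" if "weak_attractor g A'" for A'
    using weak_attractor_AE_subset[OF that weak_attractor_attractor]
      weak_attractor_AE_subset[OF weak_attractor_attractor that]
    by eventually_elim auto
  then show ?thesis
    using ex1_stationary weak_attractor_attractor by blast
qed

end
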